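(* Let $T_1^f$, $T_2^g$ be merge trees, $\delta>0$, and let $\hat T_1^f$, $\hat T_2^g$ be the augmented trees with respect to $\delta$. For any valid pair $(S,w)$, $F(S,w) = 1$ if and only if there is a partial-$\delta$-good map $\alpha: \mathcal{F}_1(S) \to T_2(w)$.
   Context: A merge tree $T^h$ is a finite rooted tree $T$ with a continuous function $h:|T|\to\mathbb{R}$ on its underlying space (interior points of edges included), decreasing along every root-to-leaf path, modified by attaching to the root a ray upward along which $h$ increases to $+\infty$. $u \succeq v$ means $u$ is an ancestor of $v$; $u^{\varepsilon}$ is the unique ancestor of $u$ with $h(u^\varepsilon) - h(u) = \varepsilon$. Tree nodes are vertices of $T$. The depth of a point $x$ is $\mathrm{depth}(x) = \max_{y \preceq x} (h(x) - h(y))$, the maximum over descendants $y$ of $x$. Let $T_1^f, T_2^g$ be merge trees and $\delta>0$. The level at height $c$ is the set of points of the tree with function value $c$. Let $C_1 = \{f(x): x \text{ a tree node of } T_1\}$, $C_2 = \{g(y): y \text{ a tree node of } T_2\}$. The superlevels of $T_1^f$ are the levels at heights in $C_1 \cup \{c-\delta: c\in C_2\}$, and those of $T_2^g$ are the levels at heights in $\{c+\delta : c \in C_1\} \cup C_2$. Sorting by height, they are $L^1_1,\dots,L^1_m$ with heights $h_1<\dots<h_m$ and $L^2_1,\dots,L^2_m$ with heights $\hat h_i = h_i + \delta$. The augmented tree $\hat T_1^f$ (resp. $\hat T_2^g$) is obtained from $T_1^f$ (resp. $T_2^g$) by adding all points of all its superlevels as (degree-2) nodes; $L^1_m$ and $L^2_m$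 each consist of the single node $\mathrm{root}(\hat T_1^f)$, $\mathrm{root}(\hat T_2^g)$. For a node $v$ on the $i$-th superlevel, $C(v)$ denotes its children in the augmented tree (all on the $(i-1)$-th superlevel); for a set $S$, $C(S)$ is the union of the children of its nodes. A pair $(S,w)$ with $w$ a node of $\hat T_2^g$ and $S$ a set of nodes of $\hat T_1^f$ is valid if for some $j$, $S \subseteq L^1_j$, $w \in L^2_j$, and all nodes of $S$ have the same ancestor at height $h_j + 2\delta$. The feasibility $F(S,w)\in\{0,1\}$ of valid pairs is defined by induction on the superlevel index $i$ of $(S,w)$: for $i=1$, $F(S,w)=1$ iff $\mathrm{depth}(w) \le 2\delta$. For $i>1$, let $C(w) = \{w_1,\dots,w_k\}$. If $C(w)=\emptyset$, $F(S,w)=1$ iff $C(S)=\emptyset$. Otherwise $F(S,w)=1$ iff there is a partition $C(S) = S_1 \cup \dots \cup S_k$ into pairwise disjoint, possibly empty sets such that for each $j \in [1,k]$: (F-1) if $S_j \ne \emptyset$ then $(S_j,w_j)$ is a valid pair with $F(S_j,w_j)=1$; (F-2) if $S_j = \emptyset$ then $\mathrm{depth}(w_j) \le 2\delta - (\hat h_i - \hat h_{i-1})$. $\mathcal{F}_1(S)$ is the forest consisting of all subtrees of $T_1^f$ rooted at nodes of $S$, and $T_2(w)$ is the subtree of $T_2^g$ rooted at $w$. For a valid pair $(S,w)$, a continuous map $\alpha: \mathcal{F}_1(S)\to T_2(w)$ is partial-$\delta$-good if: (P1) $g(\alpha(u)) = f(u)+\delta$ for all $u \in \mathcal{F}_1(S)$;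 (P2) for $u_1,u_2 \in \mathcal{F}_1(S)$ with $\alpha(u_1)\succeq\alpha(u_2)$, we have $u_1^{2\delta} \succeq u_2^{2\delta}$ in $T_1^f$; (P3) for every $z \in T_2(w)\setminus \mathrm{Im}(\alpha)$, $|g(z^F) - g(z)| \le 2\delta$, where $z^F$ is the lowest ancestor of $z$ in $\mathrm{Im}(\alpha)$. *)

theory Defs
  imports Main "HOL-Library.Extended_Real" Complex_Main
begin

text \<open>The height function is strictly increasing towards the root; along an edge it is
  a homeomorphism onto an interval, so a point of the underlying space is encoded
  as a pair (v, t): the point of height t on the edge from node v up to its parent
  (or on the ray above the root, if v is the root).\<close>

record 'a mtree =
  nodes :: "'a set"
  parent :: "'a \<Rightarrow> 'a"
  root :: 'a
  hgt :: "'a \<Rightarrow> real"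

definition merge_tree :: "'a mtree \<Rightarrow> bool" where
  "merge_tree T \<longleftrightarrow> finite (nodes T) \<and> root T \<in> nodes T \<and>
     (\<forall>v\<in>nodes T. v \<noteq> root T \<longrightarrow> parent T v \<in> nodes T \<and> hgt T v < hgt T (parent T v))"

definition pts :: "'a mtree \<Rightarrow> ('a \<times> real) set" where
  "pts T = {(v, t). v \<in> nodes T \<and> hgt T v \<le> t \<and> (v \<noteq> root T \<longrightarrow> t < hgt T (parent T v))}"

definition pstep :: "'a mtree \<Rightarrow> 'a \<Rightarrow> 'a" where
  "pstep T v = (if v = root T then v else parent T v)"

definition anc :: "'a mtree \<Rightarrow> 'a \<Rightarrow> 'a \<Rightarrow> bool" where
  "anc T u v \<longleftrightarrow> (\<exists>k. (pstep T ^^ k) v = u)"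

text \<open>Ancestor relation on points: pt_anc T x y means x \<succeq> y.\<close>
definition pt_anc :: "'a mtree \<Rightarrow> ('a \<times> real) \<Rightarrow> ('a \<times> real) \<Rightarrow> bool" where
  "pt_anc T x y \<longleftrightarrow> x \<in> pts T \<and> y \<in> pts T \<and> snd y \<le> snd x \<and> anc T (fst x) (fst y)"

text \<open>The ancestor of x at height c (so up T u (h u + eps) is u^eps).\<close>
definition up :: "'a mtree \<Rightarrow> ('a \<times> real) \<Rightarrow> real \<Rightarrow> ('a \<times> real)" where
  "up T x c = (THE y. pt_anc T y x \<and> snd y = c)"

definition depth :: "'a mtree \<Rightarrow> ('a \<times> real) \<Rightarrow> real" where
  "depth T x = Sup {snd x - snd y | y. pt_anc T x y}"

text \<open>Path metric on the underlying space (edge lengths = height differences).\<close>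
definition tdist :: "'a mtree \<Rightarrow> ('a \<times> real) \<Rightarrow> ('a \<times> real) \<Rightarrow> real" where
  "tdist T x y = (let c = Inf {snd z | z. pt_anc T z x \<and> pt_anc T z y} in (c - snd x) + (c - snd y))"

definition tcontinuous_on ::
  "'a mtree \<Rightarrow> 'b mtree \<Rightarrow> ('a \<times> real) set \<Rightarrow> (('a \<times> real) \<Rightarrow> ('b \<times> real)) \<Rightarrow> bool" where
  "tcontinuous_on T1 T2 A \<alpha> \<longleftrightarrow>
     (\<forall>x\<in>A. \<forall>e>0. \<exists>d>0. \<forall>y\<in>A. tdist T1 x y < d \<longrightarrow> tdist T2 (\<alpha> x) (\<alpha> y) < e)"

definition lev :: "'a mtree \<Rightarrow> real \<Rightarrow> ('a \<times> real) set" where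
  "lev T c = {x \<in> pts T. snd x = c}"

text \<open>Sorted heights h_1 < ... < h_m of the superlevels of T1 (0-based list);
  the superlevels of T2 have heights h_i + delta.\<close>
definition suplev_heights :: "'a mtree \<Rightarrow> 'b mtree \<Rightarrow> real \<Rightarrow> real list" where
  "suplev_heights T1 T2 \<delta> =
     sorted_list_of_set (hgt T1 ` nodes T1 \<union> (\<lambda>c. c - \<delta>) ` hgt T2 ` nodes T2)"

definition valid_pair :: "'a mtree \<Rightarrow> 'b mtree \<Rightarrow> real \<Rightarrow> ('a \<times> real) set \<Rightarrow> ('b \<times> real) \<Rightarrow> bool" where
  "valid_pair T1 T2 \<delta> S w \<longleftrightarrow> S \<noteq> {} \<and>
     (\<exists>j < length (suplev_heights T1 T2 \<delta>).
        S \<subseteq> lev T1 (suplev_heights T1 T2 \<delta> ! j) \<and>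
        w \<in> lev T2 (suplev_heights T1 T2 \<delta> ! j + \<delta>) \<and>
        (\<forall>x\<in>S. \<forall>y\<in>S. up T1 x (suplev_heights T1 T2 \<delta> ! j + 2 * \<delta>) =
                          up T1 y (suplev_heights T1 T2 \<delta> ! j + 2 * \<delta>)))"

text \<open>Feasibility at (0-based) superlevel index i.  Children in the augmented
  trees of nodes on superlevel i+1 are their descendants on superlevel i.\<close>
primrec feas :: "'a mtree \<Rightarrow> 'b mtree \<Rightarrow> real \<Rightarrow> nat \<Rightarrow> ('a \<times> real) set \<Rightarrow> ('b \<times> real) \<Rightarrow> bool" where
  "feas T1 T2 \<delta> 0 S w = (depth T2 w \<le> 2 * \<delta>)"
| "feas T1 T2 \<delta> (Suc i) S w =
    (let hs = suplev_heights T1 T2 \<delta>;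
         CW = {y \<in> lev T2 (hs ! i + \<delta>). pt_anc T2 w y};
         CS = {y \<in> lev T1 (hs ! i). \<exists>s\<in>S. pt_anc T1 s y}
     in if CW = {} then CS = {}
        else (\<exists>P :: ('b \<times> real) \<Rightarrow> ('a \<times> real) set.
                 \<Union>(P ` CW) = CS \<and>
                 (\<forall>a\<in>CW. \<forall>b\<in>CW. a \<noteq> b \<longrightarrow> P a \<inter> P b = {}) \<and>
                 (\<forall>wj\<in>CW.
                    (P wj \<noteq> {} \<longrightarrow> valid_pair T1 T2 \<delta> (P wj) wj \<and> feas T1 T2 \<delta> i (P wj) wj) \<and>
                    (P wj = {} \<longrightarrow>
                       depth T2 wj \<le> 2 * \<delta> - ((hs ! Suc i + \<delta>) - (hs ! i + \<delta>))))))"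

definition Feas :: "'a mtree \<Rightarrow> 'b mtree \<Rightarrow> real \<Rightarrow> ('a \<times> real) set \<Rightarrow> ('b \<times> real) \<Rightarrow> bool" where
  "Feas T1 T2 \<delta> S w =
     feas T1 T2 \<delta>
       (THE j. j < length (suplev_heights T1 T2 \<delta>) \<and> snd w = suplev_heights T1 T2 \<delta> ! j + \<delta>) S w"

definition forest :: "'a mtree \<Rightarrow> ('a \<times> real) set \<Rightarrow> ('a \<times> real) set" where
  "forest T S = {u \<in> pts T. \<exists>s\<in>S. pt_anc T s u}"

definition subtree :: "'a mtree \<Rightarrow> ('a \<times> real) \<Rightarrow> ('a \<times> real) set" where
  "subtree T w = {z \<in> pts T. pt_anc T w z}"

definition partial_good ::
  "'a mtree \<Rightarrow> 'b mtree \<Rightarrow> real \<Rightarrow> ('a \<times> real) set \<Rightarrow> ('b \<times> real) \<Rightarrow>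
   (('a \<times> real) \<Rightarrow> ('b \<times> real)) \<Rightarrow> bool" where
  "partial_good T1 T2 \<delta> S w \<alpha> \<longleftrightarrow>
     \<alpha> ` forest T1 S \<subseteq> subtree T2 w \<and>
     tcontinuous_on T1 T2 (forest T1 S) \<alpha> \<and>
     (\<forall>u\<in>forest T1 S. snd (\<alpha> u) = snd u + \<delta>) \<and>
     (\<forall>u1\<in>forest T1 S. \<forall>u2\<in>forest T1 S. pt_anc T2 (\<alpha> u1) (\<alpha> u2) \<longrightarrow>
        pt_anc T1 (up T1 u1 (snd u1 + 2 * \<delta>)) (up T1 u2 (snd u2 + 2 * \<delta>))) \<and>
     (\<forall>z\<in>subtree T2 w - \<alpha> ` forest T1 S.
        \<exists>zF. zF \<in> \<alpha> ` forest T1 S \<and> pt_anc T2 zF z \<and>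
             (\<forall>y\<in>\<alpha> ` forest T1 S. pt_anc T2 y z \<longrightarrow> pt_anc T2 y zF) \<and>
             \<bar>snd zF - snd z\<bar> \<le> 2 * \<delta>)"

end

theory Submission
  imports Defs "HOL-Analysis.Homotopy"
begin

text \<open>Induction on the superlevel index. All node heights of T1, and those of T2 shifted by
  -\<delta>, are superlevels, so between two consecutive superlevels both trees consist of vertical
  segments. A partial-\<delta>-good map \<alpha> preserves the ancestor order, by continuity; it partitions
  C(S) according to the child of w each point is sent to, restricts to partial-\<delta>-good maps on
  the parts, and (P3) bounds the depth of every child of w with an empty part. Conversely, the
  maps given by induction for the parts of a feasible partition glue together, extend along the
  segments up to S, and send S to w.\<close>

context
  fixes T :: "'a mtree"
begin

lemma pstep_iter_root: "(pstep T ^^ k) (root T) = root T"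
  by (induction k) (auto simp: pstep_def)

lemma anc_refl: "anc T u u"
  unfolding anc_def by (rule exI[of _ 0]) simp

lemma anc_trans: "anc T a b \<Longrightarrow> anc T b c \<Longrightarrow> anc T a c"
  unfolding anc_def by (metis funpow_add o_apply)

lemma anc_pstep: "anc T (pstep T v) v"
  unfolding anc_def by (rule exI[of _ 1]) simp

lemma anc_linear: assumes "anc T a v" "anc T b v" shows "anc T a b \<or> anc T b a"
proof -
  obtain k where k: "(pstep T ^^ k) v = a" using assms(1) unfolding anc_def by blast
  obtain m where m: "(pstep T ^^ m) v = b" using assms(2) unfolding anc_def by blast
  show ?thesis
  proof (cases "k \<le> m")
    case True
    then have "(pstep T ^^ (m - k)) a = b" using k m by (metis funpow_add le_add_diff_inverse2 o_apply)
    then show ?thesis unfolding anc_def by blast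
  next
    case False
    then have "(pstep T ^^ (k - m)) b = a" using k m
      by (metis funpow_add le_add_diff_inverse2 nat_le_linear o_apply)
    then show ?thesis unfolding anc_def by blast
  qed
qed

lemma anc_proper_imp_anc_parent:
  assumes "anc T u v" "v \<in> nodes T" "u \<noteq> v"
  shows "v \<noteq> root T \<and> anc T u (parent T v)"
proof -
  obtain k where k: "(pstep T ^^ k) v = u" using assms(1) unfolding anc_def by blast
  with assms(3) obtain m where m: "k = Suc m" by (cases k) auto
  have "v \<noteq> root T" using k assms(3) pstep_iter_root by auto
  moreover have "(pstep T ^^ m) (pstep T v) = u" using k m by (metis funpow_Suc_right o_apply)
  ultimately show ?thesis unfolding anc_def pstep_def by auto
qed

lemma ptsD:
  "x \<in> pts T \<Longrightarrow> fst x \<in> nodes T \<and> hgt T (fst x) \<le> snd x \<and>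
     (fst x \<noteq> root T \<longrightarrow> snd x < hgt T (parent T (fst x)))"
  unfolding pts_def by auto

lemma pt_ancD: "pt_anc T x y \<Longrightarrow> x \<in> pts T \<and> y \<in> pts T \<and> snd y \<le> snd x \<and> anc T (fst x) (fst y)"
  unfolding pt_anc_def by auto

lemma pt_anc_refl: "x \<in> pts T \<Longrightarrow> pt_anc T x x"
  unfolding pt_anc_def by (simp add: anc_refl)

lemma pt_anc_trans: "pt_anc T x y \<Longrightarrow> pt_anc T y z \<Longrightarrow> pt_anc T x z"
  unfolding pt_anc_def by (auto intro: anc_trans)

lemma tdist_pt_anc:
  assumes "pt_anc T a b"
  shows "tdist T a b = snd a - snd b" "tdist T b a = snd a - snd b"
proof -
  have aa: "pt_anc T a a" using assms pt_ancD pt_anc_refl by blast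
  have "Inf {snd z | z. pt_anc T z a \<and> pt_anc T z b} = snd a"
    using assms aa by (intro cInf_eq_minimum) (blast, auto simp: pt_anc_def)
  moreover have "Inf {snd z | z. pt_anc T z b \<and> pt_anc T z a} = snd a"
    using assms aa by (intro cInf_eq_minimum) (blast, auto simp: pt_anc_def)
  ultimately show "tdist T a b = snd a - snd b" "tdist T b a = snd a - snd b"
    unfolding tdist_def Let_def by auto
qed

lemma depth_le:
  assumes "x \<in> pts T" "\<And>y. pt_anc T x y \<Longrightarrow> snd x - snd y \<le> B"
  shows "depth T x \<le> B"
  unfolding depth_def using assms pt_anc_refl[OF assms(1)] by (intro cSup_least) blast+

lemma forest_desc_closed: "u \<in> forest T Q \<Longrightarrow> pt_anc T u v \<Longrightarrow> v \<in> forest T Q"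
  unfolding forest_def using pt_anc_trans pt_ancD by blast

lemma subtree_trans: "z \<in> subtree T x \<Longrightarrow> pt_anc T w x \<Longrightarrow> z \<in> subtree T w"
  unfolding subtree_def using pt_anc_trans by blast

context
  assumes mt: "merge_tree T"
begin

lemma nodes_finite: "finite (nodes T)"
  and root_in_nodes: "root T \<in> nodes T"
  and parent_in_nodes_hgt_less:
    "v \<in> nodes T \<Longrightarrow> v \<noteq> root T \<Longrightarrow> parent T v \<in> nodes T \<and> hgt T v < hgt T (parent T v)"
  using mt unfolding merge_tree_def by auto

lemma pstep_in_nodes: "v \<in> nodes T \<Longrightarrow> pstep T v \<in> nodes T"
  using parent_in_nodes_hgt_less unfolding pstep_def by auto

lemma hgt_le_pstep: "v \<in> nodes T \<Longrightarrow> hgt T v \<le> hgt T (pstep T v)"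
  using parent_in_nodes_hgt_less unfolding pstep_def by (auto intro: less_imp_le)

lemma pstep_iter_in_nodes: "v \<in> nodes T \<Longrightarrow> (pstep T ^^ k) v \<in> nodes T"
  by (induction k) (auto intro: pstep_in_nodes)

lemma hgt_le_pstep_iter: "v \<in> nodes T \<Longrightarrow> hgt T v \<le> hgt T ((pstep T ^^ k) v)"
  by (induction k) (auto intro: order_trans hgt_le_pstep pstep_iter_in_nodes)

lemma anc_in_nodes_hgt_le: "anc T u v \<Longrightarrow> v \<in> nodes T \<Longrightarrow> u \<in> nodes T \<and> hgt T v \<le> hgt T u"
  unfolding anc_def using pstep_iter_in_nodes hgt_le_pstep_iter by blast

lemma anc_proper_hgt:
  assumes "anc T u v" "v \<in> nodes T" "u \<noteq> v"
  shows "v \<noteq> root T \<and> hgt T (parent T v) \<le> hgt T u \<and> hgt T v < hgt T u"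
proof -
  have a: "v \<noteq> root T" "anc T u (parent T v)" using anc_proper_imp_anc_parent[OF assms] by auto
  have "parent T v \<in> nodes T" "hgt T v < hgt T (parent T v)"
    using parent_in_nodes_hgt_less[OF assms(2) a(1)] by auto
  with anc_in_nodes_hgt_le[OF a(2)] a show ?thesis by auto
qed

lemma anc_antisym: "anc T u v \<Longrightarrow> anc T v u \<Longrightarrow> v \<in> nodes T \<Longrightarrow> u = v"
  by (metis anc_in_nodes_hgt_le anc_proper_hgt not_le)

lemma anc_root: "v \<in> nodes T \<Longrightarrow> anc T (root T) v"
proof (induction "card {u \<in> nodes T. hgt T v < hgt T u}" arbitrary: v rule: less_induct)
  case less
  show ?case
  proof (cases "v = root T")
    case True then show ?thesis by (simp add: anc_refl)
  next
    case False
    let ?p = "parent T v"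
    have p: "?p \<in> nodes T" "hgt T v < hgt T ?p" using parent_in_nodes_hgt_less[OF less.prems False] by auto
    have "{u \<in> nodes T. hgt T ?p < hgt T u} \<subset> {u \<in> nodes T. hgt T v < hgt T u}"
      using p by auto
    then have "card {u \<in> nodes T. hgt T ?p < hgt T u} < card {u \<in> nodes T. hgt T v < hgt T u}"
      using nodes_finite by (intro psubset_card_mono) auto
    then have "anc T (root T) ?p" using less.hyps p(1) by blast
    moreover have "anc T ?p v" using anc_pstep[of v] False by (simp add: pstep_def)
    ultimately show ?thesis by (rule anc_trans)
  qed
qed

lemma pt_anc_same_edge: assumes "pt_anc T x y" "hgt T (fst x) \<le> snd y" shows "fst y = fst x"
proof (rule ccontr)
  assume ne: "fst y \<noteq> fst x"
  have a: "anc T (fst x) (fst y)" "y \<in> pts T" using assms(1) by (auto simp: pt_anc_def)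
  have "fst y \<in> nodes T" using a(2) ptsD by blast
  from anc_proper_hgt[OF a(1) this] ne
  have "fst y \<noteq> root T" "hgt T (parent T (fst y)) \<le> hgt T (fst x)" by auto
  with ptsD[OF a(2)] assms(2) show False by auto
qed

lemma pt_anc_antisym: assumes "pt_anc T x y" "pt_anc T y x" shows "x = y"
proof -
  have "snd x = snd y" using assms by (auto simp: pt_anc_def)
  moreover have "fst x = fst y"
    using assms ptsD[of y] anc_antisym[of "fst x" "fst y"] by (auto simp: pt_anc_def)
  ultimately show ?thesis by (simp add: prod_eq_iff)
qed

lemma pt_anc_linear: assumes "pt_anc T a x" "pt_anc T b x" "snd b \<le> snd a" shows "pt_anc T a b"
proof -
  have A: "a \<in> pts T" "b \<in> pts T" "anc T (fst a) (fst x)" "anc T (fst b) (fst x)"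
    using assms by (auto simp: pt_anc_def)
  show ?thesis
  proof (cases "anc T (fst a) (fst b)")
    case True then show ?thesis using A assms(3) by (simp add: pt_anc_def)
  next
    case False
    then have "anc T (fst b) (fst a)" using anc_linear[OF A(3,4)] by blast
    moreover have "fst a \<in> nodes T" using A ptsD by blast
    ultimately have "fst b = fst a \<or> (fst a \<noteq> root T \<and> hgt T (parent T (fst a)) \<le> hgt T (fst b))"
      using anc_proper_hgt by blast
    then show ?thesis using False ptsD[OF A(1)] ptsD[OF A(2)] assms(3) by (auto simp: anc_refl)
  qed
qed

lemma pt_anc_at_height_exists:
  assumes "x \<in> pts T" "snd x \<le> c" shows "\<exists>y. pt_anc T y x \<and> snd y = c"
proof -
  let ?A = "{a \<in> nodes T. anc T a (fst x) \<and> hgt T a \<le> c}"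
  have fx: "fst x \<in> ?A" using ptsD[OF assms(1)] assms(2) anc_refl by auto
  have finA: "finite ?A" using nodes_finite by auto
  have "Max (hgt T ` ?A) \<in> hgt T ` ?A" using fx finA by (intro Max_in) auto
  then obtain a where a: "a \<in> ?A" "hgt T a = Max (hgt T ` ?A)" by auto
  have "c < hgt T (parent T a)" if ar: "a \<noteq> root T"
  proof (rule ccontr)
    assume "\<not> ?thesis"
    then have "parent T a \<in> ?A"
      using parent_in_nodes_hgt_less[of a] a ar anc_trans[OF anc_pstep[of a]] by (auto simp: pstep_def)
    then have "hgt T (parent T a) \<le> hgt T a" using a finA by auto
    with parent_in_nodes_hgt_less[of a] a ar show False by auto
  qed
  then have "(a, c) \<in> pts T" using a by (auto simp: pts_def)
  then show ?thesis using a assms by (intro exI[of _ "(a,c)"]) (auto simp: pt_anc_def)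
qed

lemma pt_anc_at_height_unique: "pt_anc T y x \<Longrightarrow> pt_anc T y' x \<Longrightarrow> snd y = snd y' \<Longrightarrow> y = y'"
  by (metis order_refl pt_anc_antisym pt_anc_linear)

lemma
  assumes "x \<in> pts T" "snd x \<le> c"
  shows up_pt_anc: "pt_anc T (up T x c) x" and snd_up: "snd (up T x c) = c"
proof -
  have "\<exists>!y. pt_anc T y x \<and> snd y = c"
    using pt_anc_at_height_exists[OF assms] pt_anc_at_height_unique by blast
  then have "pt_anc T (up T x c) x \<and> snd (up T x c) = c" unfolding up_def by (rule theI')
  then show "pt_anc T (up T x c) x" "snd (up T x c) = c" by auto
qed

lemma up_eq: "pt_anc T y x \<Longrightarrow> up T x (snd y) = y"
  unfolding up_def using pt_anc_at_height_unique by blast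

lemma up_self: "x \<in> pts T \<Longrightarrow> up T x (snd x) = x"
  using up_eq pt_anc_refl by blast

lemma up_in_pts: "x \<in> pts T \<Longrightarrow> snd x \<le> c \<Longrightarrow> up T x c \<in> pts T"
  using up_pt_anc pt_ancD by blast

lemma up_via_anc: "pt_anc T a b \<Longrightarrow> snd a \<le> c \<Longrightarrow> up T b c = up T a c"
  by (metis pt_ancD pt_anc_trans up_eq up_pt_anc snd_up)

lemma up_pt_anc_up:
  assumes "pt_anc T u v" "0 \<le> d" "snd v \<le> t" "t \<le> snd u + d"
  shows "pt_anc T (up T u (snd u + d)) (up T v t)"
proof -
  have u: "u \<in> pts T" and v: "v \<in> pts T" using assms(1) pt_ancD by auto
  have "pt_anc T (up T u (snd u + d)) v"
    using pt_anc_trans[OF up_pt_anc[OF u] assms(1)] assms(2) by simp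
  moreover have "snd (up T v t) \<le> snd (up T u (snd u + d))"
    using snd_up[OF v assms(3)] snd_up[OF u] assms(2,4) by simp
  ultimately show ?thesis using pt_anc_linear up_pt_anc[OF v assms(3)] by blast
qed

lemma root_ray_pt_anc:
  "x \<in> pts T \<Longrightarrow> hgt T (root T) \<le> M \<Longrightarrow> snd x \<le> M \<Longrightarrow> pt_anc T (root T, M) x"
  using anc_root[of "fst x"] ptsD[of x] root_in_nodes by (auto simp: pt_anc_def pts_def)

lemma common_anc_within_tdist:
  assumes x: "x \<in> pts T" and y: "y \<in> pts T" and td: "tdist T x y < e"
  obtains z where "pt_anc T z x" "pt_anc T z y" "snd z - snd x < e"
proof -
  define C where "C = {snd z | z. pt_anc T z x \<and> pt_anc T z y}"
  define M where "M = max (max (snd x) (snd y)) (hgt T (root T))"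
  have "pt_anc T (root T, M) x" "pt_anc T (root T, M) y"
    using root_ray_pt_anc[OF x, of M] root_ray_pt_anc[OF y, of M] by (auto simp: M_def)
  then have "M \<in> C" unfolding C_def by force
  then have Cne: "C \<noteq> {}" by auto
  have td2: "tdist T x y = (Inf C - snd x) + (Inf C - snd y)"
    unfolding tdist_def C_def Let_def by simp
  obtain c where "c \<in> C" "c < Inf C + (e - tdist T x y) / 2"
    using cInf_lessD[OF Cne, of "Inf C + (e - tdist T x y) / 2"] td by auto
  then obtain z where z: "pt_anc T z x" "pt_anc T z y" "snd z < Inf C + (e - tdist T x y) / 2"
    unfolding C_def by blast
  have "bdd_below C" unfolding C_def bdd_below_def using pt_ancD by blast
  then have "Inf C \<le> snd z" using z unfolding C_def by (intro cInf_lower) blast+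
  moreover have "snd y \<le> Inf C" using Cne unfolding C_def by (intro cInf_greatest) (auto simp: pt_anc_def)
  moreover have "snd x \<le> snd z" using pt_ancD[OF z(1)] by blast
  moreover have "2 * snd z < 2 * Inf C + (e - tdist T x y)" using z(3) by (simp add: field_simps)
  ultimately have "snd z - snd x < e" using td2 td by linarith
  then show ?thesis using that z(1,2) by blast
qed

text \<open>Take e the height difference from x up to the next node: then a common ancestor of x and y
  within e of x lies on the edge of x.\<close>

lemma tdist_small_imp_comparable:
  assumes x: "x \<in> pts T"
  shows "\<exists>e>0. \<forall>y\<in>pts T. tdist T x y < e \<longrightarrow> pt_anc T x y \<or> pt_anc T y x"
proof -
  define e where "e = (if fst x = root T then 1 else hgt T (parent T (fst x)) - snd x)"
  have e0: "e > 0" using ptsD[OF x] by (auto simp: e_def)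
  have "pt_anc T x y \<or> pt_anc T y x" if y: "y \<in> pts T" and td: "tdist T x y < e" for y
  proof -
    obtain z where z: "pt_anc T z x" "pt_anc T z y" "snd z - snd x < e"
      using common_anc_within_tdist[OF x y td] .
    have fz: "fst z = fst x"
    proof (rule ccontr)
      assume "fst z \<noteq> fst x"
      then have "fst x \<noteq> root T \<and> hgt T (parent T (fst x)) \<le> hgt T (fst z)"
        using anc_proper_hgt pt_ancD[OF z(1)] ptsD[OF x] by metis
      moreover have "hgt T (fst z) \<le> snd z" using ptsD pt_ancD[OF z(1)] by blast
      ultimately show False using z(3) by (auto simp: e_def)
    qed
    show ?thesis
    proof (cases "snd x \<le> snd y")
      case True
      then have "fst y = fst x" using pt_anc_same_edge[OF z(2)] fz ptsD[OF x] by auto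
      then show ?thesis using True x y by (auto simp: pt_anc_def anc_refl)
    next
      case False
      let ?u = "up T y (snd x)"
      have u: "pt_anc T ?u y" "snd ?u = snd x"
        using up_pt_anc[OF y] snd_up[OF y] False by auto
      have "pt_anc T z ?u" using pt_anc_linear[OF z(2) u(1)] u(2) pt_ancD[OF z(1)] by auto
      then have "fst ?u = fst x" using pt_anc_same_edge fz ptsD[OF x] u(2) by metis
      then have "?u = x" using u(2) by (simp add: prod_eq_iff)
      then show ?thesis using u by auto
    qed
  qed
  then show ?thesis using e0 by blast
qed

lemma depth_ge: assumes "pt_anc T x y" shows "snd x - snd y \<le> depth T x"
proof -
  have "snd x - snd z \<le> snd x - Min (hgt T ` nodes T)" if "pt_anc T x z" for z
  proof -
    have "z \<in> pts T" using that by (simp add: pt_anc_def)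
    then have "Min (hgt T ` nodes T) \<le> hgt T (fst z)" "hgt T (fst z) \<le> snd z"
      using ptsD nodes_finite by auto
    then show ?thesis by linarith
  qed
  then have "bdd_above {snd x - snd y | y. pt_anc T x y}" unfolding bdd_above_def by blast
  then show ?thesis unfolding depth_def using assms by (intro cSup_upper) blast+
qed

end

end

context
  fixes T1 :: "'a mtree" and T2 :: "'b mtree" and \<delta> :: real
begin

abbreviation "hs \<equiv> suplev_heights T1 T2 \<delta>"

lemma suplev_heights_less: "i < j \<Longrightarrow> j < length hs \<Longrightarrow> hs ! i < hs ! j"
  using sorted_wrt_nth_less[OF strict_sorted_list_of_set] unfolding suplev_heights_def by blast

lemma suplev_heights_mono: "i \<le> j \<Longrightarrow> j < length hs \<Longrightarrow> hs ! i \<le> hs ! j"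
  using suplev_heights_less by (cases "i = j") (auto intro: less_imp_le)

lemma suplev_heights_inj: "i < length hs \<Longrightarrow> j < length hs \<Longrightarrow> hs ! i = hs ! j \<Longrightarrow> i = j"
  using suplev_heights_less by (metis linorder_neqE_nat order_less_irrefl)

lemma suplev_heights_gap:
  assumes "Suc i < length hs" "x \<in> set hs" shows "x \<le> hs ! i \<or> hs ! Suc i \<le> x"
proof -
  obtain k where "k < length hs" "x = hs ! k" using assms(2) by (metis in_set_conv_nth)
  then show ?thesis using suplev_heights_mono assms by (cases "k \<le> i") auto
qed

lemma suplev_heights_min: "x \<in> set hs \<Longrightarrow> hs ! 0 \<le> x"
  by (metis suplev_heights_mono in_set_conv_nth le0)

context
  assumes mt1: "merge_tree T1" and mt2: "merge_tree T2"
begin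

lemma set_suplev_heights: "set hs = hgt T1 ` nodes T1 \<union> (\<lambda>c. c - \<delta>) ` hgt T2 ` nodes T2"
  unfolding suplev_heights_def using nodes_finite[OF mt1] nodes_finite[OF mt2] by simp

lemma hgt_node_in_suplev1: "v \<in> nodes T1 \<Longrightarrow> hgt T1 v \<in> set hs"
  using set_suplev_heights by auto

lemma hgt_node_in_suplev2: "v \<in> nodes T2 \<Longrightarrow> hgt T2 v - \<delta> \<in> set hs"
  using set_suplev_heights by auto

lemma hgt_edge_le_prev_suplev1:
  assumes "u \<in> pts T1" "Suc i < length hs" "snd u < hs ! Suc i"
  shows "hgt T1 (fst u) \<le> hs ! i"
  using suplev_heights_gap[OF assms(2) hgt_node_in_suplev1] ptsD[OF assms(1)] assms(3) by fastforce

lemma hgt_edge_le_prev_suplev2: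
  assumes "z \<in> pts T2" "Suc i < length hs" "snd z < hs ! Suc i + \<delta>"
  shows "hgt T2 (fst z) \<le> hs ! i + \<delta>"
  using suplev_heights_gap[OF assms(2) hgt_node_in_suplev2] ptsD[OF assms(1)] assms(3) by fastforce

lemma suplev_min_le1: "u \<in> pts T1 \<Longrightarrow> hs ! 0 \<le> snd u"
  using suplev_heights_min[OF hgt_node_in_suplev1] ptsD by fastforce

lemma suplev_min_le2: "z \<in> pts T2 \<Longrightarrow> hs ! 0 + \<delta> \<le> snd z"
  using suplev_heights_min[OF hgt_node_in_suplev2] ptsD by fastforce

lemma tcontinuous_locally_comparable:
  assumes cont: "tcontinuous_on T1 T2 F \<alpha>" and im: "\<alpha> ` F \<subseteq> pts T2" and u: "u \<in> F"
  obtains d where "d > 0" "\<And>v. v \<in> F \<Longrightarrow> pt_anc T1 u v \<or> pt_anc T1 v u \<Longrightarrow> \<bar>snd u - snd v\<bar> < d \<Longrightarrow>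
      pt_anc T2 (\<alpha> u) (\<alpha> v) \<or> pt_anc T2 (\<alpha> v) (\<alpha> u)"
proof -
  obtain e where e: "e > 0" "\<forall>z\<in>pts T2. tdist T2 (\<alpha> u) z < e \<longrightarrow> pt_anc T2 (\<alpha> u) z \<or> pt_anc T2 z (\<alpha> u)"
    using tdist_small_imp_comparable[OF mt2] im u by blast
  obtain d where d: "d > 0" "\<forall>v\<in>F. tdist T1 u v < d \<longrightarrow> tdist T2 (\<alpha> u) (\<alpha> v) < e"
    using cont u e(1) unfolding tcontinuous_on_def by blast
  have td_eq: "tdist T1 u v = \<bar>snd u - snd v\<bar>" if "pt_anc T1 u v \<or> pt_anc T1 v u" for v
    using that
  proof
    assume anc: "pt_anc T1 u v"
    show ?thesis using tdist_pt_anc(1)[OF anc] pt_ancD[OF anc] by auto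
  next
    assume anc: "pt_anc T1 v u"
    show ?thesis using tdist_pt_anc(2)[OF anc] pt_ancD[OF anc] by auto
  qed
  have "pt_anc T2 (\<alpha> u) (\<alpha> v) \<or> pt_anc T2 (\<alpha> v) (\<alpha> u)"
    if v: "v \<in> F" "pt_anc T1 u v \<or> pt_anc T1 v u" "\<bar>snd u - snd v\<bar> < d" for v
  proof -
    have "tdist T1 u v < d" using td_eq[OF v(2)] v(3) by simp
    then have "tdist T2 (\<alpha> u) (\<alpha> v) < e" using d(2) v(1) by blast
    moreover have "\<alpha> v \<in> pts T2" using im v(1) by blast
    ultimately show ?thesis using e(2) by blast
  qed
  then show ?thesis using that d(1) by blast
qed

text \<open>Order preservation from continuity: along the segment from x up to height b, the ancestor
  at height b + \<delta> of the image is locally constant, because nearby points of T2 are comparable.\<close>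

lemma tcontinuous_up_image_locally_const:
  assumes cont: "tcontinuous_on T1 T2 F \<alpha>" and ht: "\<forall>u\<in>F. snd (\<alpha> u) = snd u + \<delta>"
    and im: "\<alpha> ` F \<subseteq> pts T2" and x: "x \<in> pts T1"
    and seg: "\<And>t. t \<in> {snd x..b} \<Longrightarrow> up T1 x t \<in> F" and t: "t \<in> {snd x..b}"
  shows "\<exists>U. openin (top_of_set {snd x..b}) U \<and> t \<in> U \<and>
    (\<forall>t'\<in>U. up T2 (\<alpha> (up T1 x t)) (b + \<delta>) = up T2 (\<alpha> (up T1 x t')) (b + \<delta>))"
proof -
  let ?p = "up T1 x"
  have px: "pt_anc T1 (?p t) x" and ps: "snd (?p t) = t" and pah: "snd (\<alpha> (?p t)) = t + \<delta>"
    if "t \<in> {snd x..b}" for t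
    using up_pt_anc[OF mt1 x] snd_up[OF mt1 x] that ht seg[OF that] by auto
  obtain d where d: "d > 0" "\<And>v. v \<in> F \<Longrightarrow> pt_anc T1 (?p t) v \<or> pt_anc T1 v (?p t) \<Longrightarrow>
      \<bar>snd (?p t) - snd v\<bar> < d \<Longrightarrow> pt_anc T2 (\<alpha> (?p t)) (\<alpha> v) \<or> pt_anc T2 (\<alpha> v) (\<alpha> (?p t))"
    using tcontinuous_locally_comparable[OF cont im seg[OF t]] by blast
  show ?thesis
  proof (intro exI conjI ballI)
    show "openin (top_of_set {snd x..b}) ({snd x..b} \<inter> ball t d)" by (intro openin_open_Int) auto
    show "t \<in> {snd x..b} \<inter> ball t d" using t d by auto
  next
    fix t' assume "t' \<in> {snd x..b} \<inter> ball t d"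
    then have t': "t' \<in> {snd x..b}" and dd: "\<bar>t - t'\<bar> < d" by (auto simp: dist_real_def)
    have "pt_anc T1 (?p t) (?p t') \<or> pt_anc T1 (?p t') (?p t)"
      using pt_anc_linear[OF mt1 px[OF t] px[OF t']] pt_anc_linear[OF mt1 px[OF t'] px[OF t]]
        ps[OF t] ps[OF t'] by linarith
    then have "pt_anc T2 (\<alpha> (?p t)) (\<alpha> (?p t')) \<or> pt_anc T2 (\<alpha> (?p t')) (\<alpha> (?p t))"
      using d(2)[OF seg[OF t']] dd ps[OF t] ps[OF t'] by simp
    moreover have "t + \<delta> \<le> b + \<delta>" "t' + \<delta> \<le> b + \<delta>" using t t' by auto
    ultimately show "up T2 (\<alpha> (?p t)) (b + \<delta>) = up T2 (\<alpha> (?p t')) (b + \<delta>)"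
      using up_via_anc[OF mt2, of "\<alpha> (?p t)" "\<alpha> (?p t')"] up_via_anc[OF mt2, of "\<alpha> (?p t')" "\<alpha> (?p t)"]
        pah[OF t] pah[OF t'] by auto
  qed
qed

lemma tcontinuous_height_shift_pt_anc:
  assumes cont: "tcontinuous_on T1 T2 F \<alpha>" and ht: "\<forall>u\<in>F. snd (\<alpha> u) = snd u + \<delta>"
    and im: "\<alpha> ` F \<subseteq> pts T2" and yx: "pt_anc T1 y x"
    and seg: "\<And>t. snd x \<le> t \<Longrightarrow> t \<le> snd y \<Longrightarrow> up T1 x t \<in> F"
  shows "pt_anc T2 (\<alpha> y) (\<alpha> x)"
proof -
  define \<psi> where "\<psi> t = up T2 (\<alpha> (up T1 x t)) (snd y + \<delta>)" for t
  have x: "x \<in> pts T1" and xy: "snd x \<le> snd y" using pt_ancD[OF yx] by auto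
  have "\<psi> (snd x) = \<psi> (snd y)"
  proof (rule connected_equivalence_relation[of "{snd x..snd y}" _ _ "\<lambda>u v. \<psi> u = \<psi> v"])
    show "connected {snd x..snd y}" by simp
    show "snd x \<in> {snd x..snd y}" "snd y \<in> {snd x..snd y}" using xy by auto
  qed (use tcontinuous_up_image_locally_const[OF cont ht im x] seg in \<open>simp_all add: \<psi>_def\<close>)
  moreover have xF: "x \<in> F" using seg[of "snd x"] xy up_self[OF mt1 x] by simp
  moreover have yF: "y \<in> F" using seg[of "snd y"] xy up_eq[OF mt1 yx] by simp
  ultimately have "up T2 (\<alpha> x) (snd y + \<delta>) = up T2 (\<alpha> y) (snd y + \<delta>)"
    unfolding \<psi>_def using up_self[OF mt1 x] up_eq[OF mt1 yx] by simp
  also have "\<dots> = \<alpha> y" using up_self[OF mt2, of "\<alpha> y"] im yF ht by (simp add: image_subset_iff)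
  finally show ?thesis
    using up_pt_anc[OF mt2, of "\<alpha> x" "snd y + \<delta>"] im xF ht xy by (simp add: image_subset_iff)
qed

end

end

definition valid_pair_at ::
  "'a mtree \<Rightarrow> 'b mtree \<Rightarrow> real \<Rightarrow> nat \<Rightarrow> ('a \<times> real) set \<Rightarrow> ('b \<times> real) \<Rightarrow> bool" where
  "valid_pair_at T1 T2 \<delta> i S w \<longleftrightarrow> i < length (suplev_heights T1 T2 \<delta>) \<and> S \<noteq> {} \<and>
     S \<subseteq> lev T1 (suplev_heights T1 T2 \<delta> ! i) \<and> w \<in> lev T2 (suplev_heights T1 T2 \<delta> ! i + \<delta>) \<and>
     (\<forall>x\<in>S. \<forall>y\<in>S. up T1 x (suplev_heights T1 T2 \<delta> ! i + 2 * \<delta>) =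
                     up T1 y (suplev_heights T1 T2 \<delta> ! i + 2 * \<delta>))"

lemma valid_pair_at_imp_valid_pair: "valid_pair_at T1 T2 \<delta> i S w \<Longrightarrow> valid_pair T1 T2 \<delta> S w"
  unfolding valid_pair_at_def valid_pair_def by blast

lemma valid_pair_imp_valid_pair_at:
  assumes "valid_pair T1 T2 \<delta> S w" "i < length (hs T1 T2 \<delta>)" "snd w = hs T1 T2 \<delta> ! i + \<delta>"
  shows "valid_pair_at T1 T2 \<delta> i S w"
proof -
  obtain j where j: "j < length (hs T1 T2 \<delta>)" "S \<noteq> {}" "S \<subseteq> lev T1 (hs T1 T2 \<delta> ! j)"
    "w \<in> lev T2 (hs T1 T2 \<delta> ! j + \<delta>)"
    "\<forall>x\<in>S. \<forall>y\<in>S. up T1 x (hs T1 T2 \<delta> ! j + 2 * \<delta>) = up T1 y (hs T1 T2 \<delta> ! j + 2 * \<delta>)"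
    using assms(1) unfolding valid_pair_def by blast
  have "hs T1 T2 \<delta> ! j = hs T1 T2 \<delta> ! i" using j(4) assms(3) by (auto simp: lev_def)
  then have "j = i" using suplev_heights_inj j(1) assms(2) by blast
  then show ?thesis using j unfolding valid_pair_at_def by blast
qed

definition feasible_partition :: "'a mtree \<Rightarrow> 'b mtree \<Rightarrow> real \<Rightarrow> nat \<Rightarrow> ('a \<times> real) set \<Rightarrow>
    ('b \<times> real) \<Rightarrow> (('b \<times> real) \<Rightarrow> ('a \<times> real) set) \<Rightarrow> bool" where
  "feasible_partition T1 T2 \<delta> i S w P =
    (let hs = suplev_heights T1 T2 \<delta>;
         CW = {y \<in> lev T2 (hs ! i + \<delta>). pt_anc T2 w y};
         CS = {y \<in> lev T1 (hs ! i). \<exists>s\<in>S. pt_anc T1 s y}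
     in \<Union>(P ` CW) = CS \<and>
        (\<forall>a\<in>CW. \<forall>b\<in>CW. a \<noteq> b \<longrightarrow> P a \<inter> P b = {}) \<and>
        (\<forall>wj\<in>CW.
           (P wj \<noteq> {} \<longrightarrow> valid_pair T1 T2 \<delta> (P wj) wj \<and> feas T1 T2 \<delta> i (P wj) wj) \<and>
           (P wj = {} \<longrightarrow> depth T2 wj \<le> 2 * \<delta> - ((hs ! Suc i + \<delta>) - (hs ! i + \<delta>)))))"

lemma feas_Suc_iff: "feas T1 T2 \<delta> (Suc i) S w \<longleftrightarrow> (\<exists>P. feasible_partition T1 T2 \<delta> i S w P)"
  unfolding feasible_partition_def feas.simps Let_def by auto

context
  fixes T1 :: "'a mtree" and T2 :: "'b mtree" and \<delta> :: real and S w
  assumes mt1: "merge_tree T1" and mt2: "merge_tree T2" and dpos: "\<delta> > 0"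
    and vp: "valid_pair_at T1 T2 \<delta> 0 S w"
begin

lemma lowest_level_facts:
  "w \<in> pts T2" "snd w = hs T1 T2 \<delta> ! 0 + \<delta>" "S \<noteq> {}" "S \<subseteq> lev T1 (hs T1 T2 \<delta> ! 0)"
  "\<forall>x\<in>S. \<forall>y\<in>S. up T1 x (hs T1 T2 \<delta> ! 0 + 2 * \<delta>) = up T1 y (hs T1 T2 \<delta> ! 0 + 2 * \<delta>)"
  using vp unfolding valid_pair_at_def lev_def by blast+

lemma lowest_level_subtree: "pt_anc T2 w z \<Longrightarrow> z = w"
  using pt_ancD suplev_min_le2[OF mt1 mt2] lowest_level_facts(2)
  by (metis order_antisym up_eq[OF mt2] up_self[OF mt2])

lemma lowest_level_forest: "forest T1 S = S"
proof
  show "forest T1 S \<subseteq> S"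
  proof
    fix u assume "u \<in> forest T1 S"
    then obtain s where s: "s \<in> S" "pt_anc T1 s u" "u \<in> pts T1" unfolding forest_def by blast
    have "snd s = hs T1 T2 \<delta> ! 0" using s lowest_level_facts(4) by (auto simp: lev_def)
    then have "snd u = snd s" using suplev_min_le1[OF mt1 mt2 s(3), where \<delta>=\<delta>] pt_ancD[OF s(2)] by fastforce
    then show "u \<in> S" using up_eq[OF mt1 s(2)] up_self[OF mt1 s(3)] s(1) by simp
  qed
  show "S \<subseteq> forest T1 S"
    using lowest_level_facts(4) pt_anc_refl[where T=T1] unfolding forest_def lev_def by auto
qed

lemma feas_lowest_level: "feas T1 T2 \<delta> 0 S w"
  using depth_le[OF lowest_level_facts(1)] lowest_level_subtree dpos by fastforce

lemma partial_good_lowest_level: "partial_good T1 T2 \<delta> S w (\<lambda>_. w)"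
  unfolding partial_good_def lowest_level_forest
proof (intro conjI ballI impI)
  show "(\<lambda>_. w) ` S \<subseteq> subtree T2 w"
    using lowest_level_facts(1) pt_anc_refl by (auto simp: subtree_def)
  show "tcontinuous_on T1 T2 S (\<lambda>_. w)"
    unfolding tcontinuous_on_def using tdist_pt_anc(1)[OF pt_anc_refl[OF lowest_level_facts(1)]]
    by auto
next
  fix u assume "u \<in> S"
  then show "snd w = snd u + \<delta>" using lowest_level_facts(2,4) by (auto simp: lev_def)
next
  fix u1 u2 assume u: "u1 \<in> S" "u2 \<in> S"
  then have "snd u1 = hs T1 T2 \<delta> ! 0" "snd u2 = hs T1 T2 \<delta> ! 0" "u1 \<in> pts T1"
    using lowest_level_facts(4) by (auto simp: lev_def)
  moreover have "up T1 u1 (snd u1 + 2 * \<delta>) \<in> pts T1" using up_in_pts[OF mt1 \<open>u1 \<in> pts T1\<close>] dpos by auto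
  ultimately show "pt_anc T1 (up T1 u1 (snd u1 + 2 * \<delta>)) (up T1 u2 (snd u2 + 2 * \<delta>))"
    using lowest_level_facts(5) u pt_anc_refl by metis
next
  fix z assume z: "z \<in> subtree T2 w - (\<lambda>_. w) ` S"
  then have "z = w" using lowest_level_subtree by (auto simp: subtree_def)
  then have False using z lowest_level_facts(3) by blast
  then show "\<exists>zF. zF \<in> (\<lambda>_. w) ` S \<and> pt_anc T2 zF z \<and>
      (\<forall>y\<in>(\<lambda>_. w) ` S. pt_anc T2 y z \<longrightarrow> pt_anc T2 y zF) \<and> \<bar>snd zF - snd z\<bar> \<le> 2 * \<delta>"
    by blast
qed

end

locale superlevel_step =
  fixes T1 :: "'a mtree" and T2 :: "'b mtree" and \<delta> :: real and i :: nat
    and S :: "('a \<times> real) set" and w :: "'b \<times> real"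
  assumes mt1: "merge_tree T1" and mt2: "merge_tree T2" and dpos: "\<delta> > 0"
    and Suc_i_less: "Suc i < length (hs T1 T2 \<delta>)"
    and vp: "valid_pair_at T1 T2 \<delta> (Suc i) S w"
begin

abbreviation "h \<equiv> hs T1 T2 \<delta> ! Suc i"
abbreviation "h' \<equiv> hs T1 T2 \<delta> ! i"
abbreviation "F \<equiv> forest T1 S"

text \<open>Superlevels are indexed from 0: (S, w) lies on superlevel Suc i, and CW, CS are the children
  C(w), C(S) on superlevel i.\<close>

definition "CW = {y \<in> lev T2 (h' + \<delta>). pt_anc T2 w y}"
definition "CS = {y \<in> lev T1 h'. \<exists>s\<in>S. pt_anc T1 s y}"

lemma prev_level_less: "h' < h"
  using suplev_heights_less[OF _ Suc_i_less] by simp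

lemma w_pts: "w \<in> pts T2"
  and snd_w: "snd w = h + \<delta>"
  and S_nonempty: "S \<noteq> {}"
  and S_level: "S \<subseteq> lev T1 h"
  and S_same_up: "\<forall>x\<in>S. \<forall>y\<in>S. up T1 x (h + 2 * \<delta>) = up T1 y (h + 2 * \<delta>)"
  using vp unfolding valid_pair_at_def lev_def by blast+

lemma SD: "s \<in> S \<Longrightarrow> s \<in> pts T1 \<and> snd s = h"
  using S_level unfolding lev_def by blast

lemma forestD: assumes "u \<in> F" shows "u \<in> pts T1 \<and> snd u \<le> h \<and> (\<exists>s\<in>S. pt_anc T1 s u)"
proof -
  obtain s where s: "s \<in> S" "pt_anc T1 s u" "u \<in> pts T1" using assms unfolding forest_def by blast
  then show ?thesis using pt_ancD[OF s(2)] SD[OF s(1)] by auto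
qed

lemma S_subset_forest: "S \<subseteq> F"
  unfolding forest_def using SD pt_anc_refl by blast

lemma forest_up: assumes "u \<in> F" "snd u \<le> t" "t \<le> h" shows "up T1 u t \<in> F"
proof -
  obtain s where s: "s \<in> S" "pt_anc T1 s u" and u: "u \<in> pts T1" using forestD[OF assms(1)] by blast
  have "pt_anc T1 s (up T1 u t)"
    using pt_anc_linear[OF mt1 s(2) up_pt_anc[OF mt1 u assms(2)]] snd_up[OF mt1 u assms(2)]
      SD[OF s(1)] assms(3) by simp
  then show ?thesis unfolding forest_def using s(1) pt_ancD by blast
qed

lemma forest_top_in_S: assumes "u \<in> F" "snd u = h" shows "u \<in> S"
proof -
  obtain s where s: "s \<in> S" "pt_anc T1 s u" using forestD[OF assms(1)] by blast
  have "up T1 u (snd s) = s" by (rule up_eq[OF mt1 s(2)])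
  moreover have "up T1 u (snd u) = u" using up_self[OF mt1] forestD[OF assms(1)] by blast
  ultimately show ?thesis using SD[OF s(1)] assms(2) s(1) by simp
qed

lemma CSD: "c \<in> CS \<Longrightarrow> c \<in> F \<and> snd c = h' \<and> c \<in> pts T1"
  unfolding CS_def forest_def lev_def by blast

lemma up_prev_in_CS:
  assumes "u \<in> F" "snd u \<le> h'" shows "up T1 u h' \<in> CS" "pt_anc T1 (up T1 u h') u"
proof -
  have u: "u \<in> pts T1" using forestD[OF assms(1)] by blast
  show "pt_anc T1 (up T1 u h') u" using up_pt_anc[OF mt1 u assms(2)] .
  have "up T1 u h' \<in> F" using forest_up[OF assms] prev_level_less by simp
  then show "up T1 u h' \<in> CS" unfolding CS_def lev_def forest_def
    using snd_up[OF mt1 u assms(2)] by blast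
qed

text \<open>No node of T1 has height strictly between h' and h, so a point u of F in this range lies
  on the edge of the node fst u, which also carries the point (fst u, h') of C(S).\<close>

lemma edge_prev_in_CS:
  assumes "u \<in> F" "h' < snd u" "snd u < h"
  shows "(fst u, h') \<in> CS" "pt_anc T1 u (fst u, h')" "hgt T1 (fst u) \<le> h'"
proof -
  have u: "u \<in> pts T1" using forestD[OF assms(1)] by blast
  show hl: "hgt T1 (fst u) \<le> h'" using hgt_edge_le_prev_suplev1[OF mt1 mt2 u Suc_i_less] assms(3) by blast
  have "(fst u, h') \<in> pts T1" using ptsD[OF u] hl assms(2) by (auto simp: pts_def)
  then show pa: "pt_anc T1 u (fst u, h')" using u assms(2) by (auto simp: pt_anc_def anc_refl)
  then have "(fst u, h') \<in> F" using forest_desc_closed[OF assms(1)] by blast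
  then show "(fst u, h') \<in> CS" unfolding CS_def lev_def forest_def by auto
qed

lemma same_edge_above_prev:
  assumes "x \<in> pts T1" "snd x < h" "pt_anc T1 x y" "h' \<le> snd y" shows "fst y = fst x"
  using pt_anc_same_edge[OF mt1 assms(3)] hgt_edge_le_prev_suplev1[OF mt1 mt2 assms(1) Suc_i_less]
    assms(2,4) by simp

lemma subtreeD: assumes "z \<in> subtree T2 w" shows "z \<in> pts T2 \<and> snd z \<le> h + \<delta> \<and> pt_anc T2 w z"
proof -
  have z: "z \<in> pts T2" "pt_anc T2 w z" using assms unfolding subtree_def by blast+
  then show ?thesis using pt_ancD[OF z(2)] snd_w by simp
qed

lemma CWD: "wj \<in> CW \<Longrightarrow> wj \<in> subtree T2 w \<and> snd wj = h' + \<delta> \<and> wj \<in> pts T2 \<and> pt_anc T2 w wj"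
  unfolding CW_def subtree_def lev_def by blast

lemma up_prev_in_CW:
  assumes "z \<in> subtree T2 w" "snd z \<le> h' + \<delta>"
  shows "up T2 z (h' + \<delta>) \<in> CW" "pt_anc T2 (up T2 z (h' + \<delta>)) z"
proof -
  have z: "z \<in> pts T2" "pt_anc T2 w z" using subtreeD[OF assms(1)] by auto
  show u: "pt_anc T2 (up T2 z (h' + \<delta>)) z" using up_pt_anc[OF mt2 z(1) assms(2)] .
  have "pt_anc T2 w (up T2 z (h' + \<delta>))"
    using pt_anc_linear[OF mt2 z(2) u] snd_up[OF mt2 z(1) assms(2)] snd_w prev_level_less by simp
  then show "up T2 z (h' + \<delta>) \<in> CW" unfolding CW_def lev_def
    using snd_up[OF mt2 z(1) assms(2)] pt_ancD[OF u] by blast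
qed

lemma edge_prev_in_CW:
  assumes "z \<in> subtree T2 w" "h' + \<delta> < snd z" "snd z < h + \<delta>"
  shows "(fst z, h' + \<delta>) \<in> CW" "pt_anc T2 z (fst z, h' + \<delta>)"
proof -
  have z: "z \<in> pts T2" "pt_anc T2 w z" using subtreeD[OF assms(1)] by auto
  have hl: "hgt T2 (fst z) \<le> h' + \<delta>"
    using hgt_edge_le_prev_suplev2[OF mt1 mt2 z(1) Suc_i_less] assms(3) by blast
  have zh: "(fst z, h' + \<delta>) \<in> pts T2" using ptsD[OF z(1)] hl assms(2) by (auto simp: pts_def)
  then show pa: "pt_anc T2 z (fst z, h' + \<delta>)"
    using z assms(2) by (auto simp: pt_anc_def anc_refl)
  then show "(fst z, h' + \<delta>) \<in> CW" unfolding CW_def lev_def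
    using pt_anc_trans[OF z(2) pa] zh by auto
qed

lemma subtree_top_eq_w: assumes "z \<in> subtree T2 w" "snd z = h + \<delta>" shows "z = w"
proof -
  have z: "z \<in> pts T2" "pt_anc T2 w z" using subtreeD[OF assms(1)] by auto
  have "up T2 z (snd w) = w" by (rule up_eq[OF mt2 z(2)])
  moreover have "up T2 z (snd z) = z" using up_self[OF mt2 z(1)] .
  ultimately show ?thesis using snd_w assms(2) by metis
qed

lemma CW_below_unique:
  assumes "x \<in> pts T2" "snd x < h + \<delta>" "pt_anc T2 x y1" "pt_anc T2 x y2"
    "snd y1 = h' + \<delta>" "snd y2 = h' + \<delta>"
  shows "y1 = y2"
proof -
  have "hgt T2 (fst x) \<le> h' + \<delta>"
    using hgt_edge_le_prev_suplev2[OF mt1 mt2 assms(1) Suc_i_less] assms(2) by blast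
  then have "fst y1 = fst x" "fst y2 = fst x"
    using pt_anc_same_edge[OF mt2 assms(3)] pt_anc_same_edge[OF mt2 assms(4)] assms(5,6) by simp_all
  then show ?thesis using assms(5,6) by (simp add: prod_eq_iff)
qed

lemma valid_pair_at_child:
  assumes "P \<noteq> {}" "P \<subseteq> CS" "wj \<in> CW"
    "\<And>c1 c2. c1 \<in> P \<Longrightarrow> c2 \<in> P \<Longrightarrow> up T1 c1 (h' + 2 * \<delta>) = up T1 c2 (h' + 2 * \<delta>)"
  shows "valid_pair_at T1 T2 \<delta> i P wj"
proof -
  have "P \<subseteq> lev T1 h'" using assms(2) unfolding CS_def by blast
  moreover have "wj \<in> lev T2 (h' + \<delta>)" using assms(3) unfolding CW_def by blast
  moreover have "i < length (hs T1 T2 \<delta>)" using Suc_i_less by simp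
  ultimately show ?thesis unfolding valid_pair_at_def using assms(1,4) by blast
qed

lemma feasible_partition_iff:
  "feasible_partition T1 T2 \<delta> i S w P \<longleftrightarrow>
   \<Union>(P ` CW) = CS \<and> (\<forall>a\<in>CW. \<forall>b\<in>CW. a \<noteq> b \<longrightarrow> P a \<inter> P b = {}) \<and>
   (\<forall>wj\<in>CW. (P wj \<noteq> {} \<longrightarrow> valid_pair T1 T2 \<delta> (P wj) wj \<and> feas T1 T2 \<delta> i (P wj) wj) \<and>
      (P wj = {} \<longrightarrow> depth T2 wj \<le> 2 * \<delta> - (h - h')))"
  unfolding feasible_partition_def CW_def CS_def Let_def by simp

end

locale step_from_good_map = superlevel_step +
  fixes \<alpha> :: "'a \<times> real \<Rightarrow> 'b \<times> real"
  assumes good: "partial_good T1 T2 \<delta> S w \<alpha>"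
begin

lemma \<alpha>_subtree: "\<alpha> ` F \<subseteq> subtree T2 w"
  and \<alpha>_cont: "tcontinuous_on T1 T2 F \<alpha>"
  and \<alpha>_height: "\<forall>u\<in>F. snd (\<alpha> u) = snd u + \<delta>"
  and \<alpha>_P2: "\<And>u1 u2. u1 \<in> F \<Longrightarrow> u2 \<in> F \<Longrightarrow> pt_anc T2 (\<alpha> u1) (\<alpha> u2) \<Longrightarrow>
        pt_anc T1 (up T1 u1 (snd u1 + 2 * \<delta>)) (up T1 u2 (snd u2 + 2 * \<delta>))"
  and \<alpha>_P3: "\<And>z. z \<in> subtree T2 w - \<alpha> ` F \<Longrightarrow>
        \<exists>zF. zF \<in> \<alpha> ` F \<and> pt_anc T2 zF z \<and> (\<forall>y\<in>\<alpha> ` F. pt_anc T2 y z \<longrightarrow> pt_anc T2 y zF) \<and>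
             \<bar>snd zF - snd z\<bar> \<le> 2 * \<delta>"
  using good unfolding partial_good_def by blast+

lemma \<alpha>_pts: "\<alpha> ` F \<subseteq> pts T2"
  using \<alpha>_subtree subtreeD by blast

lemma \<alpha>_pt_anc: assumes "x \<in> F" "y \<in> F" "pt_anc T1 y x" shows "pt_anc T2 (\<alpha> y) (\<alpha> x)"
proof (rule tcontinuous_height_shift_pt_anc[OF mt1 mt2 \<alpha>_cont \<alpha>_height \<alpha>_pts assms(3)])
  fix t assume "snd x \<le> t" "t \<le> snd y"
  then show "up T1 x t \<in> F" using forest_up[OF assms(1)] forestD[OF assms(2)] by simp
qed

lemma \<alpha>_CS_in_CW: assumes "c \<in> CS" shows "\<alpha> c \<in> CW"
proof -
  have c: "c \<in> F" "snd c = h'" using CSD[OF assms] by auto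
  then have "\<alpha> c \<in> subtree T2 w" using \<alpha>_subtree by blast
  then show ?thesis unfolding CW_def lev_def subtree_def using \<alpha>_height c by auto
qed

lemma \<alpha>_below_child:
  assumes u: "u \<in> F" and wj: "wj \<in> CW" and a: "pt_anc T2 wj (\<alpha> u)"
  shows "snd u \<le> h'" "up T1 u h' \<in> CS" "\<alpha> (up T1 u h') = wj"
proof -
  have "snd (\<alpha> u) \<le> snd wj" using pt_ancD[OF a] by blast
  then show su: "snd u \<le> h'" using \<alpha>_height u CWD[OF wj] by auto
  let ?c = "up T1 u h'"
  show c: "?c \<in> CS" using up_prev_in_CS[OF u su] by auto
  have "pt_anc T2 (\<alpha> ?c) (\<alpha> u)" using \<alpha>_pt_anc[OF u] CSD[OF c] up_prev_in_CS[OF u su] by blast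
  moreover have "snd (\<alpha> ?c) = snd wj" using \<alpha>_height CSD[OF c] CWD[OF wj] by auto
  ultimately show "\<alpha> ?c = wj" using pt_anc_at_height_unique[OF mt2 _ a] by blast
qed

definition "block wj = {c \<in> CS. \<alpha> c = wj}"

lemma forest_block_iff:
  assumes wj: "wj \<in> CW" shows "u \<in> forest T1 (block wj) \<longleftrightarrow> u \<in> F \<and> pt_anc T2 wj (\<alpha> u)"
proof
  assume "u \<in> forest T1 (block wj)"
  then obtain c where c: "c \<in> block wj" "pt_anc T1 c u" unfolding forest_def by blast
  have cF: "c \<in> F" and ac: "\<alpha> c = wj" using c(1) CSD unfolding block_def by auto
  have uF: "u \<in> F" using forest_desc_closed[OF cF c(2)] .
  show "u \<in> F \<and> pt_anc T2 wj (\<alpha> u)" using \<alpha>_pt_anc[OF uF cF c(2)] ac uF by simp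
next
  assume a: "u \<in> F \<and> pt_anc T2 wj (\<alpha> u)"
  then have "up T1 u h' \<in> block wj" using \<alpha>_below_child wj unfolding block_def by blast
  moreover have "pt_anc T1 (up T1 u h') u" using up_prev_in_CS \<alpha>_below_child(1) a wj by blast
  ultimately show "u \<in> forest T1 (block wj)" unfolding forest_def using forestD a by blast
qed

lemma partial_good_block:
  assumes wj: "wj \<in> CW" "block wj \<noteq> {}" shows "partial_good T1 T2 \<delta> (block wj) wj \<alpha>"
proof -
  let ?Fj = "forest T1 (block wj)"
  have FjF: "?Fj \<subseteq> F" using forest_block_iff[OF wj(1)] by blast
  obtain c0 where c0: "c0 \<in> block wj" using wj(2) by blast
  have c0F: "c0 \<in> F" "\<alpha> c0 = wj" using c0 CSD unfolding block_def by auto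
  have "c0 \<in> ?Fj" using c0F forest_block_iff[OF wj(1), of c0] pt_anc_refl[where T=T2] CWD[OF wj(1)] by simp
  then have wj_image: "wj \<in> \<alpha> ` ?Fj" using c0F(2) by blast
  show ?thesis unfolding partial_good_def
  proof (intro conjI ballI)
    show "\<alpha> ` ?Fj \<subseteq> subtree T2 wj"
      unfolding subtree_def using forest_block_iff[OF wj(1)] \<alpha>_pts by blast
    show "tcontinuous_on T1 T2 ?Fj \<alpha>" using \<alpha>_cont FjF unfolding tcontinuous_on_def by blast
    show "\<And>u. u \<in> ?Fj \<Longrightarrow> snd (\<alpha> u) = snd u + \<delta>" using \<alpha>_height FjF by blast
    show "\<And>u1 u2. u1 \<in> ?Fj \<Longrightarrow> u2 \<in> ?Fj \<Longrightarrow> pt_anc T2 (\<alpha> u1) (\<alpha> u2) \<longrightarrow>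
       pt_anc T1 (up T1 u1 (snd u1 + 2 * \<delta>)) (up T1 u2 (snd u2 + 2 * \<delta>))"
      using \<alpha>_P2 FjF by blast
  next
    fix z assume z: "z \<in> subtree T2 wj - \<alpha> ` ?Fj"
    have zw: "z \<in> subtree T2 w" using subtree_trans z CWD[OF wj(1)] by blast
    have zwj: "pt_anc T2 wj z" using z unfolding subtree_def by blast
    have "z \<notin> \<alpha> ` F" using z zwj forest_block_iff[OF wj(1)] by blast
    then obtain zF where zF: "zF \<in> \<alpha> ` F" "pt_anc T2 zF z"
        "\<forall>y\<in>\<alpha> ` F. pt_anc T2 y z \<longrightarrow> pt_anc T2 y zF" "\<bar>snd zF - snd z\<bar> \<le> 2 * \<delta>"
      using \<alpha>_P3 zw by blast
    have "pt_anc T2 wj zF" using zF(3) zwj wj_image FjF by blast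
    then have "zF \<in> \<alpha> ` ?Fj" using zF(1) forest_block_iff[OF wj(1)] by blast
    then show "\<exists>zF. zF \<in> \<alpha> ` ?Fj \<and> pt_anc T2 zF z \<and>
        (\<forall>y\<in>\<alpha> ` ?Fj. pt_anc T2 y z \<longrightarrow> pt_anc T2 y zF) \<and> \<bar>snd zF - snd z\<bar> \<le> 2 * \<delta>"
      using zF FjF by blast
  qed
qed

lemma valid_pair_at_block:
  assumes wj: "wj \<in> CW" "block wj \<noteq> {}" shows "valid_pair_at T1 T2 \<delta> i (block wj) wj"
proof (rule valid_pair_at_child[OF wj(2) _ wj(1)])
  show "block wj \<subseteq> CS" unfolding block_def by blast
  fix c1 c2 assume c: "c1 \<in> block wj" "c2 \<in> block wj"
  have cF: "c1 \<in> F" "c2 \<in> F" "\<alpha> c1 = \<alpha> c2" "snd c1 = h'" "snd c2 = h'"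
    using c CSD unfolding block_def by auto
  have "\<alpha> c2 \<in> pts T2" using \<alpha>_pts cF(2) by blast
  then have "pt_anc T2 (\<alpha> c1) (\<alpha> c2)" using cF(3) pt_anc_refl by simp
  then have "pt_anc T1 (up T1 c1 (snd c1 + 2 * \<delta>)) (up T1 c2 (snd c2 + 2 * \<delta>))"
    "pt_anc T1 (up T1 c2 (snd c2 + 2 * \<delta>)) (up T1 c1 (snd c1 + 2 * \<delta>))"
    using \<alpha>_P2[OF cF(1,2)] \<alpha>_P2[OF cF(2,1)] cF(3) by simp_all
  then show "up T1 c1 (h' + 2 * \<delta>) = up T1 c2 (h' + 2 * \<delta>)"
    using pt_anc_antisym[OF mt1] cF(4,5) by metis
qed

lemma empty_block_no_preimage:
  assumes "wj \<in> CW" "block wj = {}" "u \<in> F" shows "\<not> pt_anc T2 wj (\<alpha> u)"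
  using \<alpha>_below_child[OF assms(3,1)] assms(2) unfolding block_def by blast

text \<open>Below an empty block, the lowest image point above a point y of the subtree of wj can only
  be w itself: on the edge above wj the image would otherwise pass through wj.\<close>

lemma empty_block_image_above:
  assumes wj: "wj \<in> CW" "block wj = {}" and y: "pt_anc T2 wj y"
    and u: "u \<in> F" and a: "pt_anc T2 (\<alpha> u) y"
  shows "snd (\<alpha> u) = h + \<delta>"
proof (rule ccontr)
  assume ne: "snd (\<alpha> u) \<noteq> h + \<delta>"
  have au: "\<alpha> u \<in> pts T2" "snd (\<alpha> u) < h + \<delta>"
    using \<alpha>_subtree u subtreeD ne by fastforce+
  show False
  proof (cases "snd (\<alpha> u) \<le> h' + \<delta>")
    case True
    then have "pt_anc T2 wj (\<alpha> u)" using pt_anc_linear[OF mt2 y a] CWD[OF wj(1)] by simp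
    then show False using empty_block_no_preimage[OF wj u] by blast
  next
    case False
    have su: "h' < snd u" "snd u < h" using False au(2) \<alpha>_height u by auto
    note c = edge_prev_in_CS[OF u su]
    have cF: "(fst u, h') \<in> F" using CSD[OF c(1)] by blast
    have "pt_anc T2 (\<alpha> u) (\<alpha> (fst u, h'))" using \<alpha>_pt_anc[OF cF u c(2)] .
    moreover have "pt_anc T2 (\<alpha> u) wj" using pt_anc_linear[OF mt2 a y] CWD[OF wj(1)] False by simp
    moreover have "snd (\<alpha> (fst u, h')) = h' + \<delta>" using \<alpha>_height cF by simp
    ultimately have "\<alpha> (fst u, h') = wj"
      using CW_below_unique[OF au] CWD[OF wj(1)] by blast
    then show False using c(1) wj(2) unfolding block_def by blast
  qed
qed

lemma depth_empty_block:
  assumes wj: "wj \<in> CW" "block wj = {}" shows "depth T2 wj \<le> 2 * \<delta> - (h - h')"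
proof (rule depth_le)
  show "wj \<in> pts T2" using CWD[OF wj(1)] by blast
  fix y assume y: "pt_anc T2 wj y"
  have "y \<in> subtree T2 wj" using y pt_ancD[OF y] unfolding subtree_def by blast
  then have yw: "y \<in> subtree T2 w" using subtree_trans CWD[OF wj(1)] by blast
  have "y \<notin> \<alpha> ` F" using empty_block_no_preimage[OF wj] y by blast
  then obtain zF where zF: "zF \<in> \<alpha> ` F" "pt_anc T2 zF y" "\<bar>snd zF - snd y\<bar> \<le> 2 * \<delta>"
    using \<alpha>_P3 yw by blast
  then have "snd zF = h + \<delta>" using empty_block_image_above[OF wj y] by blast
  then show "snd wj - snd y \<le> 2 * \<delta> - (h - h')" using zF(3) CWD[OF wj(1)] by linarith
qed

lemma feasible_partition_block:
  assumes IH: "\<And>S' w'. valid_pair_at T1 T2 \<delta> i S' w' \<Longrightarrow>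
      feas T1 T2 \<delta> i S' w' \<longleftrightarrow> (\<exists>\<alpha>. partial_good T1 T2 \<delta> S' w' \<alpha>)"
  shows "feasible_partition T1 T2 \<delta> i S w block"
  unfolding feasible_partition_iff
proof (intro conjI ballI impI)
  show "\<Union>(block ` CW) = CS" using \<alpha>_CS_in_CW unfolding block_def by blast
  show "\<And>a b. a \<in> CW \<Longrightarrow> b \<in> CW \<Longrightarrow> a \<noteq> b \<Longrightarrow> block a \<inter> block b = {}"
    unfolding block_def by blast
  fix wj assume wj: "wj \<in> CW"
  { assume ne: "block wj \<noteq> {}"
    show "valid_pair T1 T2 \<delta> (block wj) wj"
      using valid_pair_at_imp_valid_pair[OF valid_pair_at_block[OF wj ne]] .
    show "feas T1 T2 \<delta> i (block wj) wj"
      using IH[OF valid_pair_at_block[OF wj ne]] partial_good_block[OF wj ne] by blast }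
  { assume "block wj = {}"
    then show "depth T2 wj \<le> 2 * \<delta> - (h - h')" using depth_empty_block wj by blast }
qed

end

locale step_from_partition = superlevel_step +
  fixes P :: "'b \<times> real \<Rightarrow> ('a \<times> real) set"
  assumes partition: "feasible_partition T1 T2 \<delta> i S w P"
    and IH: "\<And>S' w'. valid_pair_at T1 T2 \<delta> i S' w' \<Longrightarrow>
      feas T1 T2 \<delta> i S' w' \<longleftrightarrow> (\<exists>\<alpha>. partial_good T1 T2 \<delta> S' w' \<alpha>)"
begin

definition "sub_map wj = (SOME \<alpha>. partial_good T1 T2 \<delta> (P wj) wj \<alpha>)"
definition "part_of c = (SOME wj. wj \<in> CW \<and> c \<in> P wj)"

text \<open>Strictly between h' and h
  a point u lies on an edge of T1, whose bottom point (fst u, h') the glued map sends to a child of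
  w; u goes to the point of the edge of T2 above that child at height snd u + \<delta>.\<close>

definition "glue u = (if snd u \<le> h' then sub_map (part_of (up T1 u h')) u
   else if snd u < h then up T2 (part_of (fst u, h')) (snd u + \<delta>) else w)"

lemma parts_cover: "\<Union>(P ` CW) = CS"
  using partition unfolding feasible_partition_iff by (rule conjunct1)

lemma parts_disjoint: "a \<in> CW \<Longrightarrow> b \<in> CW \<Longrightarrow> a \<noteq> b \<Longrightarrow> P a \<inter> P b = {}"
  using partition unfolding feasible_partition_iff by blast

lemma part_feasible: "wj \<in> CW \<Longrightarrow> P wj \<noteq> {} \<Longrightarrow>
    valid_pair T1 T2 \<delta> (P wj) wj \<and> feas T1 T2 \<delta> i (P wj) wj"
  using partition unfolding feasible_partition_iff by blast

lemma empty_part_depth: "wj \<in> CW \<Longrightarrow> P wj = {} \<Longrightarrow> depth T2 wj \<le> 2 * \<delta> - (h - h')"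
  using partition unfolding feasible_partition_iff by blast

lemma part_subset_CS: "wj \<in> CW \<Longrightarrow> P wj \<subseteq> CS"
  using parts_cover by blast

lemma part_valid_pair_at: assumes "wj \<in> CW" "P wj \<noteq> {}" shows "valid_pair_at T1 T2 \<delta> i (P wj) wj"
proof -
  have "i < length (hs T1 T2 \<delta>)" using Suc_i_less by simp
  then show ?thesis
    using valid_pair_imp_valid_pair_at part_feasible[OF assms] CWD[OF assms(1)] by blast
qed

lemma partial_good_sub_map:
  assumes "wj \<in> CW" "P wj \<noteq> {}" shows "partial_good T1 T2 \<delta> (P wj) wj (sub_map wj)"
proof -
  have "\<exists>\<alpha>. partial_good T1 T2 \<delta> (P wj) wj \<alpha>"
    using IH[OF part_valid_pair_at[OF assms]] part_feasible[OF assms] by blast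
  then show ?thesis unfolding sub_map_def by (rule someI_ex)
qed

lemma part_same_up:
  "wj \<in> CW \<Longrightarrow> c1 \<in> P wj \<Longrightarrow> c2 \<in> P wj \<Longrightarrow> up T1 c1 (h' + 2 * \<delta>) = up T1 c2 (h' + 2 * \<delta>)"
  using part_valid_pair_at unfolding valid_pair_at_def by blast

lemma part_of_in: assumes "c \<in> CS" shows "part_of c \<in> CW" "c \<in> P (part_of c)"
proof -
  have "\<exists>wj. wj \<in> CW \<and> c \<in> P wj" using assms parts_cover by blast
  then have "part_of c \<in> CW \<and> c \<in> P (part_of c)" unfolding part_of_def by (rule someI_ex)
  then show "part_of c \<in> CW" "c \<in> P (part_of c)" by auto
qed

lemma part_of_eq: assumes "wj \<in> CW" "c \<in> P wj" shows "part_of c = wj"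
proof -
  have "c \<in> CS" using part_subset_CS assms by blast
  then show ?thesis using part_of_in parts_disjoint assms by blast
qed

context
  fixes wj
  assumes wj: "wj \<in> CW" and ne: "P wj \<noteq> {}"
begin

lemma sub_map_subtree: "u \<in> forest T1 (P wj) \<Longrightarrow> sub_map wj u \<in> subtree T2 wj"
  and sub_map_cont: "tcontinuous_on T1 T2 (forest T1 (P wj)) (sub_map wj)"
  and sub_map_height: "u \<in> forest T1 (P wj) \<Longrightarrow> snd (sub_map wj u) = snd u + \<delta>"
  and sub_map_P2: "u1 \<in> forest T1 (P wj) \<Longrightarrow> u2 \<in> forest T1 (P wj) \<Longrightarrow>
        pt_anc T2 (sub_map wj u1) (sub_map wj u2) \<Longrightarrow>
        pt_anc T1 (up T1 u1 (snd u1 + 2 * \<delta>)) (up T1 u2 (snd u2 + 2 * \<delta>))"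
  and sub_map_P3: "z \<in> subtree T2 wj - sub_map wj ` forest T1 (P wj) \<Longrightarrow>
        \<exists>zF. zF \<in> sub_map wj ` forest T1 (P wj) \<and> pt_anc T2 zF z \<and>
             (\<forall>y\<in>sub_map wj ` forest T1 (P wj). pt_anc T2 y z \<longrightarrow> pt_anc T2 y zF) \<and>
             \<bar>snd zF - snd z\<bar> \<le> 2 * \<delta>"
  using partial_good_sub_map[OF wj ne] unfolding partial_good_def by blast+

lemma sub_map_part: assumes "c \<in> P wj" shows "sub_map wj c = wj"
proof -
  have c: "c \<in> pts T1" "snd c = h'" using CSD part_subset_CS wj assms by blast+
  have "c \<in> forest T1 (P wj)" unfolding forest_def using assms c pt_anc_refl by blast
  then have "sub_map wj c \<in> subtree T2 wj" "snd (sub_map wj c) = snd wj"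
    using sub_map_subtree sub_map_height c CWD[OF wj] by auto
  then have a: "pt_anc T2 wj (sub_map wj c)" "sub_map wj c \<in> pts T2" "snd (sub_map wj c) = snd wj"
    unfolding subtree_def by auto
  show ?thesis using pt_anc_at_height_unique[OF mt2 a(1) pt_anc_refl[OF a(2)] a(3)[symmetric]] by simp
qed

end

lemma glue_below:
  assumes u: "u \<in> F" "snd u \<le> h'"
  shows "part_of (up T1 u h') \<in> CW" "up T1 u h' \<in> P (part_of (up T1 u h'))"
    "u \<in> forest T1 (P (part_of (up T1 u h')))" "glue u = sub_map (part_of (up T1 u h')) u"
proof -
  have c: "up T1 u h' \<in> CS" "pt_anc T1 (up T1 u h') u" using up_prev_in_CS[OF u] by auto
  show "part_of (up T1 u h') \<in> CW" "up T1 u h' \<in> P (part_of (up T1 u h'))" using part_of_in[OF c(1)] by auto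
  then show "u \<in> forest T1 (P (part_of (up T1 u h')))"
    unfolding forest_def using c(2) forestD[OF u(1)] by blast
  show "glue u = sub_map (part_of (up T1 u h')) u" using u(2) unfolding glue_def by simp
qed

lemma glue_on_part:
  assumes wj: "wj \<in> CW" and u: "u \<in> forest T1 (P wj)"
  shows "u \<in> F" "snd u \<le> h'" "part_of (up T1 u h') = wj" "glue u = sub_map wj u"
proof -
  obtain c where c: "c \<in> P wj" "pt_anc T1 c u" using u unfolding forest_def by blast
  have cc: "c \<in> F" "snd c = h'" using CSD part_subset_CS wj c(1) by blast+
  show uF: "u \<in> F" using forest_desc_closed[OF cc(1) c(2)] .
  show su: "snd u \<le> h'" using pt_ancD[OF c(2)] cc by simp
  have "up T1 u h' = c" using up_eq[OF mt1 c(2)] cc by simp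
  then show s: "part_of (up T1 u h') = wj" using part_of_eq[OF wj c(1)] by simp
  show "glue u = sub_map wj u" using glue_below(4)[OF uF su] s by simp
qed

lemma glue_between:
  assumes u: "u \<in> F" "h' < snd u" "snd u < h"
  shows "(fst u, h') \<in> CS" "part_of (fst u, h') \<in> CW" "(fst u, h') \<in> P (part_of (fst u, h'))"
    "pt_anc T1 u (fst u, h')" "glue u = up T2 (part_of (fst u, h')) (snd u + \<delta>)"
    "pt_anc T2 (glue u) (part_of (fst u, h'))" "snd (glue u) = snd u + \<delta>" "glue u \<in> pts T2"
proof -
  show c: "(fst u, h') \<in> CS" "pt_anc T1 u (fst u, h')" using edge_prev_in_CS[OF u] by auto
  show s: "part_of (fst u, h') \<in> CW" "(fst u, h') \<in> P (part_of (fst u, h'))" using part_of_in[OF c(1)] by auto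
  show e: "glue u = up T2 (part_of (fst u, h')) (snd u + \<delta>)" using u unfolding glue_def by simp
  have "part_of (fst u, h') \<in> pts T2" "snd (part_of (fst u, h')) \<le> snd u + \<delta>" using CWD[OF s(1)] u by auto
  note up = up_pt_anc[OF mt2 this] snd_up[OF mt2 this]
  then show "pt_anc T2 (glue u) (part_of (fst u, h'))" "snd (glue u) = snd u + \<delta>"
    using e by auto
  then show "glue u \<in> pts T2" using pt_ancD by blast
qed

lemma glue_top: "u \<in> F \<Longrightarrow> snd u = h \<Longrightarrow> glue u = w"
  using prev_level_less unfolding glue_def by simp

lemma glue_subtree_height: assumes u: "u \<in> F" shows "glue u \<in> subtree T2 w" "snd (glue u) = snd u + \<delta>"
proof -
  have "glue u \<in> subtree T2 w \<and> snd (glue u) = snd u + \<delta>"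
  proof (cases "snd u \<le> h'")
    case True
    note l = glue_below[OF u True]
    have ne: "P (part_of (up T1 u h')) \<noteq> {}" using l(2) by blast
    have "glue u \<in> subtree T2 (part_of (up T1 u h'))" using sub_map_subtree[OF l(1) ne l(3)] l(4) by simp
    then show ?thesis using subtree_trans[where T=T2] CWD[OF l(1)] sub_map_height[OF l(1) ne l(3)] l(4) by auto
  next
    case False
    show ?thesis
    proof (cases "snd u < h")
      case True
      note m = glue_between[OF u _ True]
      have "pt_anc T2 w (part_of (fst u, h'))" using CWD m(2) False by auto
      then have "pt_anc T2 w (glue u)" using pt_anc_linear[OF mt2 _ m(6)] m(7) snd_w True False by simp
      then show ?thesis unfolding subtree_def using m False by auto
    next
      case False
      then have "snd u = h" using forestD[OF u] by auto
      then show ?thesis using glue_top[OF u] pt_anc_refl[OF w_pts] w_pts snd_w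
        unfolding subtree_def by auto
    qed
  qed
  then show "glue u \<in> subtree T2 w" "snd (glue u) = snd u + \<delta>" by auto
qed

lemma glue_pts: "u \<in> F \<Longrightarrow> glue u \<in> pts T2"
  using glue_subtree_height subtreeD by blast

lemma glue_pt_anc_above_prev:
  assumes u1: "u1 \<in> F" and u2: "u2 \<in> F" and a: "pt_anc T1 u2 u1" and hl: "h' \<le> snd u1"
  shows "pt_anc T2 (glue u2) (glue u1)"
proof (cases "snd u2 = h")
  case True
  then show ?thesis using glue_top[OF u2] glue_subtree_height(1)[OF u1] unfolding subtree_def by auto
next
  case False
  then have s2: "snd u2 < h" using forestD[OF u2] by auto
  have s12: "snd u1 \<le> snd u2" using pt_ancD[OF a] by blast
  show ?thesis
  proof (cases "snd u2 = h'")
    case True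
    then have "snd u1 = snd u2" using s12 hl by simp
    then have "u1 = u2" using up_eq[OF mt1 a] up_self[OF mt1] forestD[OF u1] by metis
    then show ?thesis using pt_anc_refl[OF glue_pts[OF u1]] by simp
  next
    case False
    then have s2': "h' < snd u2" using hl s12 by simp
    have f: "fst u1 = fst u2" using same_edge_above_prev[OF _ s2 a hl] forestD[OF u2] by blast
    note m2 = glue_between[OF u2 s2' s2]
    show ?thesis
    proof (cases "snd u1 = h'")
      case True
      then have "u1 = (fst u2, h')" using f by (simp add: prod_eq_iff)
      moreover have "(fst u2, h') \<in> forest T1 (P (part_of (fst u2, h')))"
        using m2(3) CSD[OF m2(1)] pt_anc_refl unfolding forest_def by blast
      ultimately have "glue u1 = part_of (fst u2, h')"
        using glue_on_part(4)[OF m2(2)] sub_map_part[OF m2(2) _ m2(3)] m2(3) by auto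
      then show ?thesis using m2(6) by simp
    next
      case False
      then have s1: "h' < snd u1" using hl by simp
      note m1 = glue_between[OF u1 s1 order.strict_trans1[OF s12 s2]]
      have "snd (glue u1) \<le> snd (glue u2)" using m1(7) m2(7) s12 by simp
      then show ?thesis using pt_anc_linear[OF mt2 m2(6)] m1(6) f by simp
    qed
  qed
qed


lemma S_up_pt_anc_up:
  assumes u: "u \<in> F" and s0: "s0 \<in> S"
  shows "pt_anc T1 (up T1 s0 (h + 2 * \<delta>)) (up T1 u (snd u + 2 * \<delta>))"
proof -
  obtain s where s: "s \<in> S" "pt_anc T1 s u" using forestD[OF u] by blast
  have "pt_anc T1 (up T1 s (snd s + 2 * \<delta>)) (up T1 u (snd u + 2 * \<delta>))"
    using up_pt_anc_up[OF mt1 s(2)] dpos forestD[OF u] SD[OF s(1)] by simp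
  moreover have "up T1 s (h + 2 * \<delta>) = up T1 s0 (h + 2 * \<delta>)" using S_same_up s(1) s0 by blast
  ultimately show ?thesis using SD[OF s(1)] by simp
qed

lemma glue_P2_below:
  assumes u1: "u1 \<in> F" "snd u1 \<le> h'" and u2: "u2 \<in> F" and a: "pt_anc T2 (glue u1) (glue u2)"
  shows "pt_anc T1 (up T1 u1 (snd u1 + 2 * \<delta>)) (up T1 u2 (snd u2 + 2 * \<delta>))"
proof -
  have "snd u2 \<le> h'"
    using pt_ancD[OF a] glue_subtree_height(2)[OF u1(1)] glue_subtree_height(2)[OF u2] u1(2) by simp
  note l1 = glue_below[OF u1] and l2 = glue_below[OF u2 this]
  let ?w1 = "part_of (up T1 u1 h')" and ?w2 = "part_of (up T1 u2 h')"
  have ne1: "P ?w1 \<noteq> {}" and ne2: "P ?w2 \<noteq> {}" using l1(2) l2(2) by blast+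
  have b1: "pt_anc T2 ?w1 (glue u1)"
    using sub_map_subtree[OF l1(1) ne1 l1(3)] l1(4) unfolding subtree_def by simp
  have b2: "pt_anc T2 ?w2 (glue u2)"
    using sub_map_subtree[OF l2(1) ne2 l2(3)] l2(4) unfolding subtree_def by simp
  have "pt_anc T2 ?w1 (glue u2)" using pt_anc_trans[OF b1 a] .
  then have "?w1 = ?w2" using pt_anc_at_height_unique[OF mt2 _ b2] CWD[OF l1(1)] CWD[OF l2(1)] by simp
  then have "u2 \<in> forest T1 (P ?w1)" "pt_anc T2 (sub_map ?w1 u1) (sub_map ?w1 u2)"
    using l2(3) a l1(4) l2(4) by simp_all
  then show ?thesis using sub_map_P2[OF l1(1) ne1 l1(3)] by blast
qed

lemma glue_between_part_comparable:
  assumes u1: "u1 \<in> F" "h' < snd u1" "snd u1 < h" and u2: "u2 \<in> F"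
    and a: "pt_anc T2 (glue u1) (glue u2)"
  obtains c2 where "c2 \<in> P (part_of (fst u1, h'))" "pt_anc T1 c2 u2 \<or> pt_anc T1 u2 c2"
proof -
  note m1 = glue_between[OF u1]
  let ?w1 = "part_of (fst u1, h')"
  have a1: "glue u1 \<in> pts T2" "snd (glue u1) < h + \<delta>" using m1 u1 by auto
  show ?thesis
  proof (cases "snd u2 \<le> h'")
    case True
    note l2 = glue_below[OF u2 True]
    have ne2: "P (part_of (up T1 u2 h')) \<noteq> {}" using l2(2) by blast
    have "pt_anc T2 (part_of (up T1 u2 h')) (glue u2)"
      using sub_map_subtree[OF l2(1) ne2 l2(3)] l2(4) unfolding subtree_def by simp
    then have "pt_anc T2 (glue u1) (part_of (up T1 u2 h'))"
      using pt_anc_linear[OF mt2 a] CWD[OF l2(1)] m1(7) u1(2) by simp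
    then have "?w1 = part_of (up T1 u2 h')"
      using CW_below_unique[OF a1 m1(6)] CWD[OF l2(1)] CWD[OF m1(2)] by blast
    then show ?thesis using that l2(2) up_prev_in_CS(2)[OF u2 True] by auto
  next
    case False
    have s2: "h' < snd u2" "snd u2 < h"
      using False pt_ancD[OF a] glue_subtree_height(2)[OF u1(1)] glue_subtree_height(2)[OF u2] u1(3)
      by auto
    note m2 = glue_between[OF u2 s2]
    have "pt_anc T2 (glue u1) (part_of (fst u2, h'))" using pt_anc_trans[OF a m2(6)] .
    then have "?w1 = part_of (fst u2, h')"
      using CW_below_unique[OF a1 m1(6)] CWD[OF m2(2)] CWD[OF m1(2)] by blast
    then show ?thesis using that m2(3) m2(4) by auto
  qed
qed

lemma glue_P2_between:
  assumes u1: "u1 \<in> F" "h' < snd u1" "snd u1 < h" and u2: "u2 \<in> F"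
    and a: "pt_anc T2 (glue u1) (glue u2)"
  shows "pt_anc T1 (up T1 u1 (snd u1 + 2 * \<delta>)) (up T1 u2 (snd u2 + 2 * \<delta>))"
proof -
  let ?c1 = "(fst u1, h')" and ?up1 = "up T1 u1 (snd u1 + 2 * \<delta>)"
    and ?up2 = "up T1 u2 (snd u2 + 2 * \<delta>)"
  note m1 = glue_between[OF u1]
  obtain c2 where c2: "c2 \<in> P (part_of ?c1)" "pt_anc T1 c2 u2 \<or> pt_anc T1 u2 c2"
    using glue_between_part_comparable[OF assms] .
  have c2D: "c2 \<in> pts T1" "snd c2 = h'" using CSD part_subset_CS[OF m1(2)] c2(1) by blast+
  have "pt_anc T1 ?up1 (up T1 ?c1 (h' + 2 * \<delta>))"
    using up_pt_anc_up[OF mt1 m1(4)] dpos u1(2) by simp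
  also have "up T1 ?c1 (h' + 2 * \<delta>) = up T1 c2 (h' + 2 * \<delta>)"
    using part_same_up[OF m1(2) m1(3) c2(1)] .
  finally have up1_c2: "pt_anc T1 ?up1 c2"
    using pt_anc_trans[OF _ up_pt_anc[OF mt1 c2D(1)]] c2D(2) dpos by simp
  have u2p: "u2 \<in> pts T1" using forestD[OF u2] by blast
  have up2: "pt_anc T1 ?up2 u2" using up_pt_anc[OF mt1 u2p] dpos by simp
  have "snd u2 \<le> snd u1"
    using pt_ancD[OF a] glue_subtree_height(2)[OF u1(1)] glue_subtree_height(2)[OF u2] by simp
  then have heights: "snd ?up2 \<le> snd ?up1"
    using snd_up[OF mt1 u2p] snd_up[OF mt1] forestD[OF u1(1)] dpos by simp
  from c2(2) show ?thesis
  proof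
    assume "pt_anc T1 c2 u2"
    then show ?thesis using pt_anc_linear[OF mt1 pt_anc_trans[OF up1_c2] up2] heights by blast
  next
    assume "pt_anc T1 u2 c2"
    then show ?thesis using pt_anc_linear[OF mt1 up1_c2 pt_anc_trans[OF up2]] heights by blast
  qed
qed

lemma glue_P2:
  assumes u1: "u1 \<in> F" and u2: "u2 \<in> F" and a: "pt_anc T2 (glue u1) (glue u2)"
  shows "pt_anc T1 (up T1 u1 (snd u1 + 2 * \<delta>)) (up T1 u2 (snd u2 + 2 * \<delta>))"
proof -
  consider "snd u1 \<le> h'" | "h' < snd u1" "snd u1 < h" | "snd u1 = h"
    using forestD[OF u1] by fastforce
  then show ?thesis
  proof cases
    case 1
    then show ?thesis using glue_P2_below[OF u1 _ u2 a] by blast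
  next
    case 2
    then show ?thesis using glue_P2_between[OF u1 _ _ u2 a] by blast
  next
    case 3
    then show ?thesis using S_up_pt_anc_up[OF u2 forest_top_in_S[OF u1]] by simp
  qed
qed


lemma w_in_glue_image: "w \<in> glue ` F"
proof -
  obtain s where s: "s \<in> S" using S_nonempty by blast
  then have "s \<in> F" using S_subset_forest by blast
  moreover have "glue s = w" using glue_top[OF \<open>s \<in> F\<close>] SD[OF s] by blast
  ultimately show ?thesis by force
qed

lemma part_of_up_eq:
  assumes u: "u \<in> F" "snd u \<le> h'" and wz: "wz \<in> CW"
    and a: "pt_anc T2 (glue u) z" and b: "pt_anc T2 wz z"
  shows "part_of (up T1 u h') = wz"
proof -
  note l = glue_below[OF u]
  have ne: "P (part_of (up T1 u h')) \<noteq> {}" using l(2) by blast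
  have "pt_anc T2 (part_of (up T1 u h')) (glue u)"
    using sub_map_subtree[OF l(1) ne l(3)] l(4) unfolding subtree_def by simp
  then have "pt_anc T2 (part_of (up T1 u h')) z" using pt_anc_trans[OF _ a] by blast
  then show ?thesis using pt_anc_at_height_unique[OF mt2 _ b] CWD[OF l(1)] CWD[OF wz] by simp
qed

lemma part_of_edge_eq:
  assumes u: "u \<in> F" "h' < snd u" "snd u < h" and wz: "wz \<in> CW"
    and a: "pt_anc T2 (glue u) wz"
  shows "part_of (fst u, h') = wz"
proof -
  note m = glue_between[OF u]
  have "snd (glue u) < h + \<delta>" using m(7) u by simp
  then show ?thesis using CW_below_unique[OF m(8) _ m(6) a] CWD[OF m(2)] CWD[OF wz] by simp
qed

definition "lowest_image_anc z zF \<longleftrightarrow>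
  zF \<in> glue ` F \<and> pt_anc T2 zF z \<and> (\<forall>y\<in>glue ` F. pt_anc T2 y z \<longrightarrow> pt_anc T2 y zF)"

lemma lowest_image_anc_w:
  assumes z: "z \<in> subtree T2 w" and close: "h + \<delta> - snd z \<le> 2 * \<delta>"
    and only_top: "\<And>u. u \<in> F \<Longrightarrow> pt_anc T2 (glue u) z \<Longrightarrow> snd u < h \<Longrightarrow> False"
  shows "\<exists>zF. lowest_image_anc z zF \<and> \<bar>snd zF - snd z\<bar> \<le> 2 * \<delta>"
proof (intro exI conjI)
  show "\<bar>snd w - snd z\<bar> \<le> 2 * \<delta>" using close subtreeD[OF z] snd_w by simp
  have "pt_anc T2 y w" if y: "y \<in> glue ` F" "pt_anc T2 y z" for y
  proof -
    obtain u where u: "u \<in> F" "y = glue u" using y(1) by blast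
    then have "\<not> snd u < h" using only_top y(2) by blast
    then have "snd u = h" using forestD[OF u(1)] by simp
    then show ?thesis using glue_top[OF u(1)] u(2) pt_anc_refl[OF w_pts] by simp
  qed
  then show "lowest_image_anc z w"
    unfolding lowest_image_anc_def using w_in_glue_image subtreeD[OF z] by blast
qed

lemma glue_P3_below_nonempty:
  assumes z: "z \<in> subtree T2 w - glue ` F" "snd z \<le> h' + \<delta>"
    and ne: "P (up T2 z (h' + \<delta>)) \<noteq> {}"
  shows "\<exists>zF. lowest_image_anc z zF \<and> \<bar>snd zF - snd z\<bar> \<le> 2 * \<delta>"
proof -
  let ?wz = "up T2 z (h' + \<delta>)"
  let ?Fz = "forest T1 (P ?wz)"
  have wz: "?wz \<in> CW" "pt_anc T2 ?wz z" using up_prev_in_CW z by auto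
  have "z \<in> subtree T2 ?wz" using wz subtreeD z unfolding subtree_def by blast
  moreover have "z \<notin> sub_map ?wz ` ?Fz" using glue_on_part[OF wz(1)] z(1) by force
  ultimately obtain zF where zF: "zF \<in> sub_map ?wz ` ?Fz" "pt_anc T2 zF z"
      "\<forall>y\<in>sub_map ?wz ` ?Fz. pt_anc T2 y z \<longrightarrow> pt_anc T2 y zF" "\<bar>snd zF - snd z\<bar> \<le> 2 * \<delta>"
    using sub_map_P3[OF wz(1) ne] by blast
  obtain u0 where u0: "u0 \<in> ?Fz" "zF = sub_map ?wz u0" using zF(1) by blast
  have zF_image: "zF \<in> glue ` F" using glue_on_part[OF wz(1) u0(1)] u0(2) by force
  have zF_low: "snd zF \<le> h' + \<delta>"
    using sub_map_subtree[OF wz(1) ne u0(1)] u0(2) CWD[OF wz(1)] pt_ancD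
    unfolding subtree_def by fastforce
  have "pt_anc T2 y zF" if y: "y \<in> glue ` F" "pt_anc T2 y z" for y
  proof (cases "snd zF \<le> snd y")
    case True
    then show ?thesis using pt_anc_linear[OF mt2 y(2) zF(2)] by blast
  next
    case False
    obtain u where u: "u \<in> F" "y = glue u" using y(1) by blast
    have su: "snd u \<le> h'" using False zF_low glue_subtree_height(2)[OF u(1)] u(2) by simp
    have "part_of (up T1 u h') = ?wz" using part_of_up_eq[OF u(1) su wz(1) _ wz(2)] y(2) u(2) by simp
    then have "y \<in> sub_map ?wz ` ?Fz" using glue_below[OF u(1) su] u(2) by auto
    then show ?thesis using zF(3) y(2) by blast
  qed
  then show ?thesis unfolding lowest_image_anc_def using zF_image zF(2,4) by blast
qed

lemma glue_P3_below_empty: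
  assumes z: "z \<in> subtree T2 w" "snd z \<le> h' + \<delta>"
    and empty: "P (up T2 z (h' + \<delta>)) = {}"
  shows "\<exists>zF. lowest_image_anc z zF \<and> \<bar>snd zF - snd z\<bar> \<le> 2 * \<delta>"
proof (rule lowest_image_anc_w[OF z(1)])
  let ?wz = "up T2 z (h' + \<delta>)"
  have wz: "?wz \<in> CW" "pt_anc T2 ?wz z" using up_prev_in_CW z by auto
  have "snd ?wz - snd z \<le> depth T2 ?wz" using depth_ge[OF mt2 wz(2)] .
  then show "h + \<delta> - snd z \<le> 2 * \<delta>" using empty_part_depth[OF wz(1) empty] CWD[OF wz(1)] by simp
  fix u assume u: "u \<in> F" "pt_anc T2 (glue u) z" "snd u < h"
  show False
  proof (cases "snd u \<le> h'")
    case True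
    then show False using part_of_up_eq[OF u(1) True wz(1) u(2) wz(2)] glue_below(2)[OF u(1) True] empty
      by simp
  next
    case False
    then have su: "h' < snd u" by simp
    have "pt_anc T2 (glue u) ?wz"
      using pt_anc_linear[OF mt2 u(2) wz(2)] CWD[OF wz(1)] glue_between(7)[OF u(1) su u(3)] su by simp
    then show False using part_of_edge_eq[OF u(1) su u(3) wz(1)] glue_between(3)[OF u(1) su u(3)] empty
      by simp
  qed
qed

text \<open>A point z strictly between the levels h' + \<delta> and h + \<delta> outside the image lies on an edge
  of T2 whose bottom point carries an empty part: a nonempty part would put z in the image.\<close>

lemma glue_P3_between:
  assumes z: "z \<in> subtree T2 w - glue ` F" "h' + \<delta> < snd z" "snd z < h + \<delta>"
  shows "\<exists>zF. lowest_image_anc z zF \<and> \<bar>snd zF - snd z\<bar> \<le> 2 * \<delta>"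
proof -
  let ?wz = "(fst z, h' + \<delta>)"
  have wz: "?wz \<in> CW" "pt_anc T2 z ?wz" using edge_prev_in_CW z by auto
  have empty: "P ?wz = {}"
  proof (rule ccontr)
    assume "P ?wz \<noteq> {}"
    then obtain c0 where c0: "c0 \<in> P ?wz" by blast
    have c0F: "c0 \<in> F" "snd c0 = h'" "c0 \<in> pts T1" using CSD part_subset_CS[OF wz(1)] c0 by blast+
    let ?t = "snd z - \<delta>" let ?u = "up T1 c0 ?t"
    have t: "h' < ?t" "?t < h" using z by auto
    have uF: "?u \<in> F" using forest_up[OF c0F(1)] t c0F(2) by simp
    have up: "pt_anc T1 ?u c0" "snd ?u = ?t" using up_pt_anc[OF mt1 c0F(3)] snd_up[OF mt1 c0F(3)] t c0F(2) by auto
    have "fst c0 = fst ?u" using same_edge_above_prev[OF _ _ up(1)] forestD[OF uF] up(2) t c0F(2) by simp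
    then have c0_eq: "(fst ?u, h') = c0" using c0F(2) by (simp add: prod_eq_iff)
    have "glue ?u = up T2 (part_of (fst ?u, h')) (snd ?u + \<delta>)" using glue_between(5)[OF uF] up(2) t by simp
    also have "\<dots> = up T2 ?wz (snd z)" using c0_eq part_of_eq[OF wz(1) c0] up(2) by simp
    also have "\<dots> = z" using up_eq[OF mt2 wz(2)] by simp
    finally show False using uF z(1) by force
  qed
  show ?thesis
  proof (rule lowest_image_anc_w)
    show "z \<in> subtree T2 w" using z(1) by blast
    have "0 \<le> depth T2 ?wz" using depth_ge[OF mt2 pt_anc_refl] CWD[OF wz(1)] by fastforce
    then show "h + \<delta> - snd z \<le> 2 * \<delta>" using empty_part_depth[OF wz(1) empty] z by simp
    fix u assume u: "u \<in> F" "pt_anc T2 (glue u) z" "snd u < h"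
    have "snd z \<le> snd (glue u)" using pt_ancD[OF u(2)] by blast
    then have su: "h' < snd u" using glue_subtree_height(2)[OF u(1)] z by simp
    have "pt_anc T2 (glue u) ?wz" using pt_anc_trans[OF u(2) wz(2)] .
    then show False using part_of_edge_eq[OF u(1) su u(3) wz(1)] glue_between(3)[OF u(1) su u(3)] empty
      by simp
  qed
qed

lemma glue_P3:
  assumes z: "z \<in> subtree T2 w - glue ` F"
  shows "\<exists>zF. lowest_image_anc z zF \<and> \<bar>snd zF - snd z\<bar> \<le> 2 * \<delta>"
proof -
  have "snd z \<noteq> h + \<delta>" using subtree_top_eq_w[of z] z w_in_glue_image by auto
  then consider "snd z \<le> h' + \<delta>" "P (up T2 z (h' + \<delta>)) \<noteq> {}" | "snd z \<le> h' + \<delta>" "P (up T2 z (h' + \<delta>)) = {}"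
    | "h' + \<delta> < snd z" "snd z < h + \<delta>"
    using subtreeD z by fastforce
  then show ?thesis
    using glue_P3_below_nonempty[OF z] glue_P3_below_empty glue_P3_between[OF z] z by cases blast+
qed


lemma glue_tdist_above_prev:
  assumes x: "x \<in> F" and y: "y \<in> F" "pt_anc T1 y x" and hx: "h' \<le> snd x"
  shows "tdist T2 (glue x) (glue y) = tdist T1 x y" "tdist T2 (glue y) (glue x) = tdist T1 y x"
proof -
  have a: "pt_anc T2 (glue y) (glue x)" using glue_pt_anc_above_prev[OF x y hx] .
  have "snd (glue y) - snd (glue x) = snd y - snd x"
    using glue_subtree_height(2)[OF x] glue_subtree_height(2)[OF y(1)] by simp
  then show "tdist T2 (glue x) (glue y) = tdist T1 x y" "tdist T2 (glue y) (glue x) = tdist T1 y x"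
    using tdist_pt_anc[OF a] tdist_pt_anc[OF y(2)] by simp_all
qed

lemma glue_continuous_below:
  assumes x: "x \<in> F" "snd x \<le> h'" and e: "e > 0"
  shows "\<exists>d>0. \<forall>y\<in>F. tdist T1 x y < d \<longrightarrow> tdist T2 (glue x) (glue y) < e"
proof -
  obtain \<epsilon> where eps: "\<epsilon> > 0" "\<forall>y\<in>pts T1. tdist T1 x y < \<epsilon> \<longrightarrow> pt_anc T1 x y \<or> pt_anc T1 y x"
    using tdist_small_imp_comparable[OF mt1] forestD[OF x(1)] by blast
  note l = glue_below[OF x]
  let ?wj = "part_of (up T1 x h')"
  have ne: "P ?wj \<noteq> {}" using l(2) by blast
  obtain dj where dj: "dj > 0" "\<forall>y\<in>forest T1 (P ?wj). tdist T1 x y < dj \<longrightarrow>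
      tdist T2 (sub_map ?wj x) (sub_map ?wj y) < e"
    using sub_map_cont[OF l(1) ne] l(3) e unfolding tcontinuous_on_def by blast
  define d where "d = min (min \<epsilon> dj) (if snd x < h' then min e (h' - snd x) else e)"
  have "tdist T2 (glue x) (glue y) < e" if y: "y \<in> F" and td: "tdist T1 x y < d" for y
  proof -
    have in_part: "tdist T2 (glue x) (glue y) < e" if yF: "y \<in> forest T1 (P ?wj)"
      using dj(2) yF l(4) glue_on_part(4)[OF l(1) yF] td by (simp add: d_def)
    have "pt_anc T1 x y \<or> pt_anc T1 y x" using eps(2) forestD[OF y] td by (auto simp: d_def)
    then show ?thesis
    proof
      assume "pt_anc T1 x y"
      then show ?thesis using in_part forest_desc_closed[OF l(3)] by blast
    next
      assume yx: "pt_anc T1 y x"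
      show ?thesis
      proof (cases "snd y \<le> h'")
        case True
        then show ?thesis using in_part glue_below(3)[OF y True] up_via_anc[OF mt1 yx True] by simp
      next
        case False
        then have "\<not> snd x < h'" using td tdist_pt_anc(2)[OF yx] by (auto simp: d_def)
        moreover have "tdist T1 x y < e" using td by (auto simp: d_def split: if_splits)
        ultimately show ?thesis using glue_tdist_above_prev(1)[OF x(1) y yx] by simp
      qed
    qed
  qed
  moreover have "d > 0" using eps dj e by (auto simp: d_def)
  ultimately show ?thesis by blast
qed

lemma glue_continuous_above:
  assumes x: "x \<in> F" "h' < snd x" and e: "e > 0"
  shows "\<exists>d>0. \<forall>y\<in>F. tdist T1 x y < d \<longrightarrow> tdist T2 (glue x) (glue y) < e"
proof -
  obtain \<epsilon> where eps: "\<epsilon> > 0" "\<forall>y\<in>pts T1. tdist T1 x y < \<epsilon> \<longrightarrow> pt_anc T1 x y \<or> pt_anc T1 y x"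
    using tdist_small_imp_comparable[OF mt1] forestD[OF x(1)] by blast
  define d where "d = min \<epsilon> (min (snd x - h') e)"
  have "tdist T2 (glue x) (glue y) < e" if y: "y \<in> F" and td: "tdist T1 x y < d" for y
  proof -
    have "pt_anc T1 x y \<or> pt_anc T1 y x" using eps(2) forestD[OF y] td by (auto simp: d_def)
    then show ?thesis
    proof
      assume xy: "pt_anc T1 x y"
      then have "h' \<le> snd y" using td tdist_pt_anc(1)[OF xy] by (simp add: d_def)
      then show ?thesis using glue_tdist_above_prev(2)[OF y x(1) xy] td by (simp add: d_def)
    next
      assume yx: "pt_anc T1 y x"
      then show ?thesis using glue_tdist_above_prev(1)[OF x(1) y yx] x(2) td by (simp add: d_def)
    qed
  qed
  moreover have "d > 0" using eps e x(2) by (auto simp: d_def)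
  ultimately show ?thesis by blast
qed

lemma partial_good_glue: "partial_good T1 T2 \<delta> S w glue"
  unfolding partial_good_def
proof (intro conjI ballI impI)
  show "glue ` F \<subseteq> subtree T2 w" using glue_subtree_height(1) by blast
  show "tcontinuous_on T1 T2 F glue"
    unfolding tcontinuous_on_def
  proof (intro ballI allI impI)
    fix x and e :: real assume "x \<in> F" "e > 0"
    then show "\<exists>d>0. \<forall>y\<in>F. tdist T1 x y < d \<longrightarrow> tdist T2 (glue x) (glue y) < e"
      using glue_continuous_below glue_continuous_above by (cases "snd x \<le> h'") simp_all
  qed
  show "\<And>u. u \<in> F \<Longrightarrow> snd (glue u) = snd u + \<delta>" using glue_subtree_height(2) by blast
  show "\<And>u1 u2. u1 \<in> F \<Longrightarrow> u2 \<in> F \<Longrightarrow> pt_anc T2 (glue u1) (glue u2) \<Longrightarrow>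
      pt_anc T1 (up T1 u1 (snd u1 + 2 * \<delta>)) (up T1 u2 (snd u2 + 2 * \<delta>))" by (rule glue_P2)
  show "\<And>z. z \<in> subtree T2 w - glue ` F \<Longrightarrow> \<exists>zF. zF \<in> glue ` F \<and> pt_anc T2 zF z \<and>
      (\<forall>y\<in>glue ` F. pt_anc T2 y z \<longrightarrow> pt_anc T2 y zF) \<and> \<bar>snd zF - snd z\<bar> \<le> 2 * \<delta>"
    using glue_P3 unfolding lowest_image_anc_def by blast
qed

end

context
  fixes T1 :: "'a mtree" and T2 :: "'b mtree" and \<delta> :: real
  assumes mt1: "merge_tree T1" and mt2: "merge_tree T2" and dpos: "\<delta> > 0"
begin

lemma feas_iff_partial_good:
  "valid_pair_at T1 T2 \<delta> i S w \<Longrightarrow> feas T1 T2 \<delta> i S w \<longleftrightarrow> (\<exists>\<alpha>. partial_good T1 T2 \<delta> S w \<alpha>)"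
proof (induction i arbitrary: S w)
  case 0
  then show ?case using feas_lowest_level[OF mt1 mt2 dpos] partial_good_lowest_level[OF mt1 mt2 dpos] by blast
next
  case (Suc i)
  have "Suc i < length (hs T1 T2 \<delta>)" using Suc.prems unfolding valid_pair_at_def by blast
  note step = superlevel_step.intro[OF mt1 mt2 dpos this Suc.prems]
  show ?case unfolding feas_Suc_iff
  proof
    assume "\<exists>P. feasible_partition T1 T2 \<delta> i S w P"
    then obtain P where "feasible_partition T1 T2 \<delta> i S w P" ..
    then show "\<exists>\<alpha>. partial_good T1 T2 \<delta> S w \<alpha>"
      using step_from_partition.partial_good_glue step_from_partition.intro[OF step]
        step_from_partition_axioms.intro Suc.IH by blast
  next
    assume "\<exists>\<alpha>. partial_good T1 T2 \<delta> S w \<alpha>"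
    then obtain \<alpha> where "partial_good T1 T2 \<delta> S w \<alpha>" ..
    then show "\<exists>P. feasible_partition T1 T2 \<delta> i S w P"
      using step_from_good_map.feasible_partition_block step_from_good_map.intro[OF step]
        step_from_good_map_axioms.intro Suc.IH by blast
  qed
qed

end

theorem lemma1:
  fixes T1 :: "'a mtree" and T2 :: "'b mtree" and \<delta> :: real
    and S :: "('a \<times> real) set" and w :: "'b \<times> real"
  assumes "merge_tree T1" and "merge_tree T2" and "\<delta> > 0"
    and "valid_pair T1 T2 \<delta> S w"
  shows "Feas T1 T2 \<delta> S w \<longleftrightarrow> (\<exists>\<alpha>. partial_good T1 T2 \<delta> S w \<alpha>)"
proof -
  obtain j where j: "j < length (hs T1 T2 \<delta>)" "w \<in> lev T2 (hs T1 T2 \<delta> ! j + \<delta>)"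
    using assms(4) unfolding valid_pair_def by blast
  have sw: "snd w = hs T1 T2 \<delta> ! j + \<delta>" using j(2) by (simp add: lev_def)
  have "(THE j. j < length (hs T1 T2 \<delta>) \<and> snd w = hs T1 T2 \<delta> ! j + \<delta>) = j"
    using j(1) sw suplev_heights_inj by (intro the_equality) auto
  then have "Feas T1 T2 \<delta> S w = feas T1 T2 \<delta> j S w" unfolding Feas_def by simp
  moreover have "valid_pair_at T1 T2 \<delta> j S w"
    using valid_pair_imp_valid_pair_at[OF assms(4) j(1) sw] .
  ultimately show ?thesis using feas_iff_partial_good[OF assms(1-3)] by simp
qed

end
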